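(* Let $H$ be a connected graph on $t\ge 2$ vertices. If $h_H(\mathbf{x};K_q)$ has M-convex support for some $q\ge t$, then $h_H(\mathbf{x};G)$ has M-convex support for every antiferromagnetic weighted graph $G$.
   Context: A weighted graph $G$ on $[n]$ is a symmetric matrix with nonnegative entries $G(i,j)$ (loops allowed); it is antiferromagnetic if it has at most one positive eigenvalue, counted with multiplicity. $K_q$ is the loopless complete graph on $q$ vertices with $\{0,1\}$ weights. For a graph $H$, the $G$-chromatic function is the polynomial in $\mathbf{x}=(x_1,\dots,x_n)$ \[h_H(\mathbf{x};G)=\sum_{\phi:V(H)\to[n]}\prod_{uv\in E(H)}G(\phi(u),\phi(v))\prod_{v\in V(H)}x_{\phi(v)}.\] The support of a polynomial is the set of exponent vectors in $\mathbb{N}_0^n$ of monomials with nonzero coefficient. A set $S\subseteq\mathbb{N}_0^n$ is M-convex if for all $\mathbf{a},\mathbf{b}\in S$ and every $i$ with $a_i>b_i$ there is $j$ with $a_j<b_j$ and $\mathbf{a}-\mathbf{e}_i+\mathbf{e}_j\in S$. *)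

theory Defs
  imports "Jordan_Normal_Form.Char_Poly" "HOL-Library.FuncSet"
begin

definition weighted_graph :: "nat \<Rightarrow> real mat \<Rightarrow> bool" where
  "weighted_graph n G \<longleftrightarrow> G \<in> carrier_mat n n \<and> transpose_mat G = G \<and>
     (\<forall>i<n. \<forall>j<n. G $$ (i, j) \<ge> 0)"

definition num_pos_eigenvalues :: "real mat \<Rightarrow> nat" where
  "num_pos_eigenvalues G =
     (\<Sum>x\<in>{x. x > 0 \<and> poly (char_poly G) x = 0}. order x (char_poly G))"

definition antiferromagnetic :: "nat \<Rightarrow> real mat \<Rightarrow> bool" where
  "antiferromagnetic n G \<longleftrightarrow> weighted_graph n G \<and> num_pos_eigenvalues G \<le> 1"

definition complete_graph :: "nat \<Rightarrow> real mat" where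
  "complete_graph q = mat q q (\<lambda>(i, j). if i = j then 0 else 1)"

text \<open>A simple graph H on vertex set {0..<t}: each edge {u,v} listed once as (u,v) with u<v.\<close>
definition simple_graph :: "nat \<Rightarrow> (nat \<times> nat) set \<Rightarrow> bool" where
  "simple_graph t E \<longleftrightarrow> E \<subseteq> {(u, v). u < v \<and> v < t}"

definition connected_graph :: "nat \<Rightarrow> (nat \<times> nat) set \<Rightarrow> bool" where
  "connected_graph t E \<longleftrightarrow>
     (\<forall>u<t. \<forall>v<t. (\<lambda>x y. (x, y) \<in> E \<or> (y, x) \<in> E)\<^sup>*\<^sup>* u v)"

text \<open>Coefficient of the monomial x^a in h_H(x;G), where H = ({0..<t},E) and G is on [n].\<close>
definition hcoeff :: "nat \<Rightarrow> (nat \<times> nat) set \<Rightarrow> nat \<Rightarrow> real mat \<Rightarrow> (nat \<Rightarrow> nat) \<Rightarrow> real" where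
  "hcoeff t E n G a =
     (\<Sum>\<phi>\<in>{0..<t} \<rightarrow>\<^sub>E {0..<n}.
        if (\<forall>i<n. card {v\<in>{0..<t}. \<phi> v = i} = a i)
        then (\<Prod>(u, v)\<in>E. G $$ (\<phi> u, \<phi> v)) else 0)"

text \<open>Support of h_H(x;G): exponent vectors in N_0^n (functions vanishing outside [n]).\<close>
definition hsupport :: "nat \<Rightarrow> (nat \<times> nat) set \<Rightarrow> nat \<Rightarrow> real mat \<Rightarrow> (nat \<Rightarrow> nat) set" where
  "hsupport t E n G = {a. (\<forall>i\<ge>n. a i = 0) \<and> hcoeff t E n G a \<noteq> 0}"

definition M_convex :: "(nat \<Rightarrow> nat) set \<Rightarrow> bool" where
  "M_convex S \<longleftrightarrow> (\<forall>a\<in>S. \<forall>b\<in>S. \<forall>i. a i > b i \<longrightarrow>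
     (\<exists>j. a j < b j \<and> a(i := a i - 1, j := a j + 1) \<in> S))"

end

theory Submission
  imports Defs "HOL-Computational_Algebra.Fundamental_Theorem_Algebra"
    "Jordan_Normal_Form.Schur_Decomposition" "HOL-Combinatorics.Permutations"
begin

(* An antiferromagnetic matrix has at most one positive eigenvalue, so its quadratic form satisfies
   the reverse Cauchy-Schwarz inequality; testing it on e_i + e_k and e_j + s e_l shows that in the
   support graph of G non-adjacency is transitive through non-isolated vertices. So the non-isolated
   part of the support graph consists of looped vertices adjacent to everything and of independent
   classes that are completely joined to each other.
   The support of h_H(x;G) is the set of exponent vectors of homomorphisms from H to this graph. A
   homomorphism only matters through its block sums (vertices can be moved inside a class or among the
   looped vertices), and it is recorded by a proper colouring of H with n + t colours: a class is
   coloured by a representative, and vertices sent to looped vertices get distinct fresh colours.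
   M-convexity for proper colourings transfers from q >= t colours to any number of colours, and an
   exchange step between two such colourings translates back to an exchange step for homomorphisms. *)

section \<open>Real symmetric matrices\<close>

lemma real_symmetric_has_eigenvector:
  fixes A :: "real mat"
  assumes A: "A \<in> carrier_mat n n" and sym: "A\<^sup>T = A" and n: "n > 0"
  shows "\<exists>e v. v \<in> carrier_vec n \<and> v \<noteq> 0\<^sub>v n \<and> A *\<^sub>v v = e \<cdot>\<^sub>v v"
proof -
  let ?Ac = "map_mat complex_of_real A"
  have Ac: "?Ac \<in> carrier_mat n n" using A by auto
  have cp: "char_poly ?Ac = map_poly of_real (char_poly A)"
    using of_real_hom.char_poly_hom[OF A] by simp
  have "degree (char_poly ?Ac) = n" using degree_monic_char_poly[OF Ac] by simp
  hence "\<not> constant (poly (char_poly ?Ac))" using n by (simp add: constant_degree)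
  then obtain z where z: "poly (char_poly ?Ac) z = 0" using fundamental_theorem_of_algebra by blast
  hence "eigenvalue ?Ac z" using eigenvalue_root_char_poly[OF Ac] by simp
  then obtain v where "eigenvector ?Ac v z" unfolding eigenvalue_def by blast
  hence v: "v \<in> carrier_vec n" and v0: "v \<noteq> 0\<^sub>v n" and Av: "?Ac *\<^sub>v v = z \<cdot>\<^sub>v v"
    unfolding eigenvector_def using Ac by auto
  have symA: "\<And>i j. i < n \<Longrightarrow> j < n \<Longrightarrow> A $$ (j, i) = A $$ (i, j)"
    using sym A by (metis carrier_matD index_transpose_mat(1))
  txt \<open>The Hermitian form \<open>v\<^sup>* A v\<close> is real and equals \<open>z |v|\<^sup>2\<close>, so \<open>z\<close> is real.\<close>
  define S where "S = (\<Sum>i<n. cnj (v $ i) * (\<Sum>j<n. of_real (A $$ (i,j)) * v $ j))"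
  define r where "r = (\<Sum>i<n. (cmod (v $ i))\<^sup>2)"
  have row: "\<And>i. i < n \<Longrightarrow> (?Ac *\<^sub>v v) $ i = (\<Sum>j<n. of_real (A $$ (i,j)) * v $ j)"
    using A v by (auto simp: scalar_prod_def row_def lessThan_atLeast0 intro!: sum.cong)
  have "S = (\<Sum>i<n. cnj (v $ i) * (z * v $ i))"
    unfolding S_def using row Av v by (auto intro!: sum.cong simp flip: row)
  also have "\<dots> = z * of_real r"
    unfolding r_def of_real_sum sum_distrib_left
    by (auto simp: algebra_simps simp flip: complex_norm_square intro!: sum.cong)
  finally have S_eq: "S = z * of_real r" .
  have "cnj S = (\<Sum>i<n. \<Sum>j<n. cnj (v $ j) * of_real (A $$ (j,i)) * v $ i)"
    unfolding S_def by (auto simp: sum_distrib_left symA algebra_simps intro!: sum.cong)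
  also have "\<dots> = S"
    unfolding S_def by (subst sum.swap) (simp add: sum_distrib_left algebra_simps)
  finally have "Im S = 0" by (metis cnj.simps(2) neg_equal_zero)
  obtain i0 where i0: "i0 < n" "v $ i0 \<noteq> 0" using v v0 by (metis carrier_vecD eq_vecI index_zero_vec)
  have "r > 0" unfolding r_def by (rule sum_pos2[of _ i0]) (use i0 in auto)
  with \<open>Im S = 0\<close> S_eq have "Im z = 0" by simp
  hence "z = of_real (Re z)" by (simp add: complex_eq_iff)
  hence "poly (map_poly of_real (char_poly A)) (of_real (Re z) :: complex) = 0" using z cp by simp
  hence "eigenvalue A (Re z)" using eigenvalue_root_char_poly[OF A] by simp
  then obtain w where "eigenvector A w (Re z)" using find_eigenvector[OF A] by blast
  thus ?thesis unfolding eigenvector_def using A by auto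
qed

lemma real_vec_self_scalar_prod_nonneg: "(w :: real vec) \<bullet> w \<ge> 0"
  unfolding scalar_prod_def by (auto intro: sum_nonneg)

lemma nonzero_vec_dim_pos:
  assumes "v \<in> carrier_vec n" and "v \<noteq> 0\<^sub>v n"
  shows "n > 0"
proof (rule ccontr)
  assume "\<not> n > 0"
  with assms(1) have "v = 0\<^sub>v n" by (intro eq_vecI) auto
  with assms(2) show False ..
qed

lemma orthonormal_list_with_first:
  fixes v :: "real vec"
  assumes v: "v \<in> carrier_vec n" and v0: "v \<noteq> 0\<^sub>v n"
  shows "\<exists>us. length us = n \<and> set us \<subseteq> carrier_vec n \<and> us ! 0 = (1 / sqrt (v \<bullet> v)) \<cdot>\<^sub>v v \<and>
           (\<forall>i<n. \<forall>j<n. us ! i \<bullet> us ! j = (if i = j then 1 else 0))"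
proof -
  interpret cof_vec_space n "TYPE(real)" .
  have n: "n > 0" using nonzero_vec_dim_pos[OF v v0] .
  define b where "b = basis_completion v"
  from basis_completion[OF v v0, folded b_def]
  have dist_b: "distinct b" and indep: "\<not> lin_dep (set b)" and b: "set b \<subseteq> carrier_vec n"
    and hdb: "hd b = v" and len_b: "length b = n" by auto
  from hdb len_b n obtain vs where bv: "b = v # vs" by (cases b) auto
  define ws where "ws = gram_schmidt n b"
  from gram_schmidt_result[OF b dist_b indep ws_def]
  have ws: "set ws \<subseteq> carrier_vec n" "corthogonal ws" "length ws = n" by (auto simp: len_b)
  from gram_schmidt_hd[OF v, of vs, folded bv] have "hd ws = v" unfolding ws_def .
  hence ws0: "ws ! 0 = v" using ws(3) n by (cases ws) auto
  have orth: "\<And>i j. i < n \<Longrightarrow> j < n \<Longrightarrow> (ws ! i \<bullet> ws ! j = 0) = (i \<noteq> j)"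
    using ws(2,3) unfolding corthogonal_def by auto
  have wpos: "\<And>i. i < n \<Longrightarrow> ws ! i \<bullet> ws ! i > 0"
    using orth real_vec_self_scalar_prod_nonneg by (metis less_eq_real_def)
  define us where "us = map (\<lambda>w. (1 / sqrt (w \<bullet> w)) \<cdot>\<^sub>v w) ws"
  have "us ! i \<bullet> us ! j = (if i = j then 1 else 0)" if i: "i < n" and j: "j < n" for i j
  proof -
    have "ws ! i \<in> carrier_vec n" "ws ! j \<in> carrier_vec n" using ws i j by auto
    hence "us ! i \<bullet> us ! j = (1 / sqrt (ws!i \<bullet> ws!i)) * (1 / sqrt (ws!j \<bullet> ws!j)) * (ws ! i \<bullet> ws ! j)"
      unfolding us_def using i j ws(3) by simp
    thus ?thesis using orth[OF i j] wpos[OF i] wpos[OF j]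
      by (auto simp: real_sqrt_mult[symmetric] field_simps)
  qed
  moreover have "length us = n" "set us \<subseteq> carrier_vec n" using ws unfolding us_def by auto
  moreover have "us ! 0 = (1 / sqrt (v \<bullet> v)) \<cdot>\<^sub>v v" using ws0 ws(3) n unfolding us_def by simp
  ultimately show ?thesis by blast
qed

lemma orthogonal_mat_with_first_col:
  fixes v :: "real vec"
  assumes v: "v \<in> carrier_vec n" and v0: "v \<noteq> 0\<^sub>v n"
  shows "\<exists>W \<in> carrier_mat n n. W\<^sup>T * W = 1\<^sub>m n \<and> W * W\<^sup>T = 1\<^sub>m n \<and>
           col W 0 = (1 / sqrt (v \<bullet> v)) \<cdot>\<^sub>v v"
proof -
  obtain us where us: "length us = n" "set us \<subseteq> carrier_vec n" "us ! 0 = (1 / sqrt (v \<bullet> v)) \<cdot>\<^sub>v v"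
    and orthonormal: "\<And>i j. i < n \<Longrightarrow> j < n \<Longrightarrow> us ! i \<bullet> us ! j = (if i = j then 1 else 0)"
    using orthonormal_list_with_first[OF v v0] by blast
  have n: "n > 0" using nonzero_vec_dim_pos[OF v v0] .
  define W where "W = mat_of_cols n us"
  have W: "W \<in> carrier_mat n n" unfolding W_def using us(1) by (metis mat_of_cols_carrier(1))
  have "us ! j \<in> carrier_vec n" if "j < n" for j using us(1,2) that nth_mem by blast
  hence colW: "\<And>j. j < n \<Longrightarrow> col W j = us ! j" unfolding W_def using us(1) by auto
  have WTW: "W\<^sup>T * W = 1\<^sub>m n" by (rule eq_matI) (use W colW orthonormal in auto)
  moreover have "W * W\<^sup>T = 1\<^sub>m n" using mat_mult_left_right_inverse[OF _ W WTW] W by auto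
  moreover have "col W 0 = (1 / sqrt (v \<bullet> v)) \<cdot>\<^sub>v v" using colW[OF n] us(3) by simp
  ultimately show ?thesis using W by blast
qed

lemma symmetric_bilinear_form_commute:
  fixes A :: "real mat"
  assumes A: "A \<in> carrier_mat n n" and sym: "A\<^sup>T = A"
    and x: "x \<in> carrier_vec n" and y: "y \<in> carrier_vec n"
  shows "y \<bullet> (A *\<^sub>v x) = x \<bullet> (A *\<^sub>v y)"
proof -
  have "x \<bullet> (A *\<^sub>v y) = (A\<^sup>T *\<^sub>v x) \<bullet> y"
    using transpose_vec_mult_scalar[OF A y x] by simp
  also have "\<dots> = y \<bullet> (A *\<^sub>v x)" using sym A x y by (metis comm_scalar_prod mult_mat_vec_carrier)
  finally show ?thesis by simp
qed

lemma index_transpose_mult_mult: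
  fixes A W :: "real mat"
  assumes "A \<in> carrier_mat n n" "W \<in> carrier_mat n n" "i < n" "j < n"
  shows "(W\<^sup>T * A * W) $$ (i, j) = col W i \<bullet> (A *\<^sub>v col W j)"
proof -
  have "W\<^sup>T * A * W = W\<^sup>T * (A * W)" using assms by (auto intro: assoc_mult_mat)
  hence "(W\<^sup>T * A * W) $$ (i, j) = row W\<^sup>T i \<bullet> col (A * W) j" using assms by simp
  also have "col (A * W) j = A *\<^sub>v col W j" using assms by (intro col_mult2) auto
  finally show ?thesis using assms by simp
qed

lemma symmetric_deflation:
  fixes A W :: "real mat"
  assumes A: "A \<in> carrier_mat (Suc m) (Suc m)" and sym: "A\<^sup>T = A"
    and W: "W \<in> carrier_mat (Suc m) (Suc m)" and WTW: "W\<^sup>T * W = 1\<^sub>m (Suc m)"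
    and eigen: "A *\<^sub>v col W 0 = e \<cdot>\<^sub>v col W 0"
  defines "A3 \<equiv> mat m m (\<lambda>(i, j). (W\<^sup>T * A * W) $$ (Suc i, Suc j))"
  shows "W\<^sup>T * A * W = four_block_mat (mat 1 1 (\<lambda>_. e)) (0\<^sub>m 1 m) (0\<^sub>m m 1) A3"
    and "A3\<^sup>T = A3"
proof -
  have colW: "\<And>i. i < Suc m \<Longrightarrow> col W i \<in> carrier_vec (Suc m)" using W by auto
  have orth: "col W i \<bullet> col W j = (if i = j then 1 else 0)" if "i < Suc m" "j < Suc m" for i j
    using arg_cong[OF WTW, of "\<lambda>M. M $$ (i, j)"] W that by simp
  note entry = index_transpose_mult_mult[OF A W]
  have col0: "(W\<^sup>T * A * W) $$ (i, 0) = (if i = 0 then e else 0)" if "i < Suc m" for i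
    using entry[OF that] orth[OF that] colW[OF that] colW[of 0] by (simp add: eigen)
  have row0: "(W\<^sup>T * A * W) $$ (0, j) = (if j = 0 then e else 0)" if "j < Suc m" for j
  proof -
    have "(W\<^sup>T * A * W) $$ (0, j) = col W j \<bullet> (A *\<^sub>v col W 0)"
      using entry[OF _ that] colW[OF that] colW[of 0] symmetric_bilinear_form_commute[OF A sym] by simp
    also have "\<dots> = (if j = 0 then e else 0)" using entry[OF that, of 0] col0[OF that] by simp
    finally show ?thesis .
  qed
  show "W\<^sup>T * A * W = four_block_mat (mat 1 1 (\<lambda>_. e)) (0\<^sub>m 1 m) (0\<^sub>m m 1) A3"
    by (rule eq_matI) (use W A col0 row0 in \<open>auto simp: A3_def\<close>)
  show "A3\<^sup>T = A3"
    by (rule eq_matI)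
      (auto simp: A3_def entry colW symmetric_bilinear_form_commute[OF A sym])
qed

lemma block_diagonal_mult:
  assumes "A1 \<in> carrier_mat k k" "A2 \<in> carrier_mat k k" "D1 \<in> carrier_mat m m" "D2 \<in> carrier_mat m m"
  shows "four_block_mat A1 (0\<^sub>m k m) (0\<^sub>m m k) D1 * four_block_mat A2 (0\<^sub>m k m) (0\<^sub>m m k) D2 =
         four_block_mat (A1 * A2) (0\<^sub>m k m) (0\<^sub>m m k) (D1 * D2)"
  using assms by (subst mult_four_block_mat[OF assms(1) _ _ assms(3) assms(2) _ _ assms(4)]) auto

lemma orthogonal_block_extension:
  fixes V :: "real mat"
  assumes V: "V \<in> carrier_mat m m" "V\<^sup>T * V = 1\<^sub>m m" "V * V\<^sup>T = 1\<^sub>m m"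
  defines "U \<equiv> four_block_mat (1\<^sub>m 1) (0\<^sub>m 1 m) (0\<^sub>m m 1) V"
  shows "U \<in> carrier_mat (Suc m) (Suc m)" "U\<^sup>T * U = 1\<^sub>m (Suc m)" "U * U\<^sup>T = 1\<^sub>m (Suc m)"
    and "B \<in> carrier_mat m m \<Longrightarrow> U\<^sup>T * four_block_mat (mat 1 1 (\<lambda>_. e)) (0\<^sub>m 1 m) (0\<^sub>m m 1) B * U =
      four_block_mat (mat 1 1 (\<lambda>_. e)) (0\<^sub>m 1 m) (0\<^sub>m m 1) (V\<^sup>T * B * V)"
proof -
  have UT: "U\<^sup>T = four_block_mat (1\<^sub>m 1) (0\<^sub>m 1 m) (0\<^sub>m m 1) V\<^sup>T"
    unfolding U_def using V transpose_four_block_mat[of "1\<^sub>m 1" 1 1 "0\<^sub>m 1 m" m "0\<^sub>m m 1" m V] by simp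
  show "U \<in> carrier_mat (Suc m) (Suc m)" using V unfolding U_def by auto
  show "U\<^sup>T * U = 1\<^sub>m (Suc m)" "U * U\<^sup>T = 1\<^sub>m (Suc m)"
    using V four_block_one_mat[of 1 m] unfolding UT by (simp_all add: U_def block_diagonal_mult)
  show "U\<^sup>T * four_block_mat (mat 1 1 (\<lambda>_. e)) (0\<^sub>m 1 m) (0\<^sub>m m 1) B * U =
      four_block_mat (mat 1 1 (\<lambda>_. e)) (0\<^sub>m 1 m) (0\<^sub>m m 1) (V\<^sup>T * B * V)" if "B \<in> carrier_mat m m"
    unfolding UT using V that by (simp add: U_def block_diagonal_mult)
qed

lemma transpose_mult_conjugate:
  fixes B W U :: "real mat"
  assumes "B \<in> carrier_mat n n" "W \<in> carrier_mat n n" "U \<in> carrier_mat n n"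
  shows "(W * U)\<^sup>T * B * (W * U) = U\<^sup>T * (W\<^sup>T * B * W) * U"
  using assms by (simp add: transpose_mult[of W n n U n] assoc_mult_mat[of _ n n _ n _ n])

theorem real_symmetric_orthogonally_diagonalizable:
  fixes A :: "real mat"
  assumes "A \<in> carrier_mat n n" and "A\<^sup>T = A"
  shows "\<exists>W ds. W \<in> carrier_mat n n \<and> W\<^sup>T * W = 1\<^sub>m n \<and> W * W\<^sup>T = 1\<^sub>m n \<and>
           length ds = n \<and> W\<^sup>T * A * W = mat_diag n (\<lambda>i. ds ! i)"
  using assms
proof (induction n arbitrary: A)
  case 0
  show ?case
    by (rule exI[of _ "1\<^sub>m 0"], rule exI[of _ "[]"]) (use 0 in \<open>auto intro!: eq_matI simp: mat_diag_def\<close>)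
next
  case (Suc m A)
  have A: "A \<in> carrier_mat (Suc m) (Suc m)" and sym: "A\<^sup>T = A" using Suc.prems by auto
  obtain e v where v: "v \<in> carrier_vec (Suc m)" and v0: "v \<noteq> 0\<^sub>v (Suc m)" and Av: "A *\<^sub>v v = e \<cdot>\<^sub>v v"
    using real_symmetric_has_eigenvector[OF A sym] by blast
  obtain W where W: "W \<in> carrier_mat (Suc m) (Suc m)" and WTW: "W\<^sup>T * W = 1\<^sub>m (Suc m)"
    and WWT: "W * W\<^sup>T = 1\<^sub>m (Suc m)" and W0: "col W 0 = (1 / sqrt (v \<bullet> v)) \<cdot>\<^sub>v v"
    using orthogonal_mat_with_first_col[OF v v0] by blast
  have "A *\<^sub>v col W 0 = e \<cdot>\<^sub>v col W 0"
    unfolding W0 using mult_mat_vec[OF A v] Av by (auto simp: smult_smult_assoc mult.commute)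
  note deflation = symmetric_deflation[OF A sym W WTW this]
  define A3 where "A3 = mat m m (\<lambda>(i, j). (W\<^sup>T * A * W) $$ (Suc i, Suc j))"
  have A3: "A3 \<in> carrier_mat m m" unfolding A3_def by simp
  from Suc.IH[OF A3 deflation(2)[folded A3_def]] obtain V ds where
    V: "V \<in> carrier_mat m m" "V\<^sup>T * V = 1\<^sub>m m" "V * V\<^sup>T = 1\<^sub>m m"
    and ds: "length ds = m" "V\<^sup>T * A3 * V = mat_diag m (\<lambda>i. ds ! i)" by blast
  define U where "U = four_block_mat (1\<^sub>m 1) (0\<^sub>m 1 m) (0\<^sub>m m 1) V"
  note U = orthogonal_block_extension[OF V, folded U_def]
  show ?case
  proof (intro exI conjI)
    show WU: "W * U \<in> carrier_mat (Suc m) (Suc m)" using W U(1) by simp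
    show "(W * U)\<^sup>T * (W * U) = 1\<^sub>m (Suc m)"
      using transpose_mult_conjugate[OF _ W U(1), of "1\<^sub>m (Suc m)"] W U(1,2) WTW by simp
    show "W * U * (W * U)\<^sup>T = 1\<^sub>m (Suc m)"
      using mat_mult_left_right_inverse[OF _ WU] WU \<open>(W * U)\<^sup>T * (W * U) = 1\<^sub>m (Suc m)\<close> by auto
    show "length (e # ds) = Suc m" using ds by simp
    have "(W * U)\<^sup>T * A * (W * U) = four_block_mat (mat 1 1 (\<lambda>_. e)) (0\<^sub>m 1 m) (0\<^sub>m m 1) (V\<^sup>T * A3 * V)"
      using transpose_mult_conjugate[OF A W U(1)] U(4)[OF A3] deflation(1)[folded A3_def] by simp
    also have "\<dots> = mat_diag (Suc m) (\<lambda>i. (e # ds) ! i)"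
      unfolding ds by (rule eq_matI) (auto simp: mat_diag_def)
    finally show "(W * U)\<^sup>T * A * (W * U) = mat_diag (Suc m) (\<lambda>i. (e # ds) ! i)" .
  qed
qed

lemma orthogonal_diagonalization_inverse:
  fixes A W :: "real mat"
  assumes A: "A \<in> carrier_mat n n" and W: "W \<in> carrier_mat n n" and WWT: "W * W\<^sup>T = 1\<^sub>m n"
    and diag: "W\<^sup>T * A * W = D"
  shows "A = W * D * W\<^sup>T"
proof -
  have "W * (W\<^sup>T * A * W) * W\<^sup>T = (W * W\<^sup>T) * A * (W * W\<^sup>T)"
    using A W by (simp add: assoc_mult_mat[of _ n n _ n _ n])
  thus ?thesis using A WWT diag by simp
qed

lemma mat_diag_mult_vec:
  assumes "v \<in> carrier_vec n"
  shows "mat_diag n f *\<^sub>v v = vec n (\<lambda>k. f k * v $ k)"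
proof (rule eq_vecI)
  have delta: "(if i = j then f j else 0) * v $ j = (if i = j then f j * v $ j else 0)" for i j
    by simp
  show "(mat_diag n f *\<^sub>v v) $ i = vec n (\<lambda>k. f k * v $ k) $ i" if "i < dim_vec (vec n (\<lambda>k. f k * v $ k))" for i
    using that assms by (simp add: mat_diag_def scalar_prod_def row_def delta)
qed (simp add: mat_diag_def)

lemma quadratic_form_orthogonal_diagonalization:
  fixes A W :: "real mat"
  assumes A: "A \<in> carrier_mat n n" and W: "W \<in> carrier_mat n n" and WWT: "W * W\<^sup>T = 1\<^sub>m n"
    and diag: "W\<^sup>T * A * W = mat_diag n f" and x: "x \<in> carrier_vec n"
  shows "x \<bullet> (A *\<^sub>v x) = (\<Sum>k<n. f k * (col W k \<bullet> x)\<^sup>2)"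
proof -
  define y where "y = W\<^sup>T *\<^sub>v x"
  have y: "y \<in> carrier_vec n" using W x unfolding y_def by simp
  have yk: "y $ k = col W k \<bullet> x" if "k < n" for k using W x that unfolding y_def by simp
  have "A *\<^sub>v x = W *\<^sub>v (mat_diag n f *\<^sub>v y)"
    unfolding orthogonal_diagonalization_inverse[OF A W WWT diag] y_def using W x
    by (simp add: assoc_mult_mat_vec[of _ n n _ n])
  moreover have "mat_diag n f *\<^sub>v y \<in> carrier_vec n" using y by (simp add: mat_diag_mult_vec)
  ultimately have "x \<bullet> (A *\<^sub>v x) = y \<bullet> (mat_diag n f *\<^sub>v y)"
    using transpose_vec_mult_scalar[OF W _ x] unfolding y_def by simp
  also have "\<dots> = (\<Sum>k<n. f k * (y $ k)\<^sup>2)"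
    using y by (auto simp: mat_diag_mult_vec scalar_prod_def lessThan_atLeast0 power2_eq_square
        intro!: sum.cong)
  also have "\<dots> = (\<Sum>k<n. f k * (col W k \<bullet> x)\<^sup>2)" using yk by simp
  finally show ?thesis .
qed

lemma char_poly_orthogonal_diagonalization:
  fixes A W :: "real mat"
  assumes A: "A \<in> carrier_mat n n" and W: "W \<in> carrier_mat n n"
    and WWT: "W * W\<^sup>T = 1\<^sub>m n" and WTW: "W\<^sup>T * W = 1\<^sub>m n"
    and ds: "length ds = n" and diag: "W\<^sup>T * A * W = mat_diag n (\<lambda>k. ds ! k)"
  shows "char_poly A = (\<Prod>d\<leftarrow>ds. [:- d, 1:])"
proof -
  have "similar_mat_wit A (mat_diag n (\<lambda>k. ds ! k)) W W\<^sup>T"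
    using orthogonal_diagonalization_inverse[OF A W WWT diag] A W WWT WTW
    by (auto intro!: similar_mat_witI[of _ _ n])
  hence "char_poly A = char_poly (mat_diag n (\<lambda>k. ds ! k))"
    by (intro char_poly_similar) (auto simp: similar_mat_def)
  also have "\<dots> = (\<Prod>d\<leftarrow>diag_mat (mat_diag n (\<lambda>k. ds ! k)). [:- d, 1:])"
    by (rule char_poly_upper_triangular) (auto simp: mat_diag_def upper_triangular_def)
  also have "diag_mat (mat_diag n (\<lambda>k. ds ! k)) = ds"
    using ds by (intro nth_equalityI) (auto simp: diag_mat_def mat_diag_def)
  finally show ?thesis .
qed

lemma order_prod_linear_factors:
  "Polynomial.order (x :: 'a :: idom) (\<Prod>d\<leftarrow>ds. [:- d, 1:]) = count_list ds x"
proof (induction ds)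
  case (Cons d ds)
  have "(\<Prod>d\<leftarrow>ds. [:- d, 1:]) \<noteq> 0" by auto
  hence "[:- d, 1:] * (\<Prod>d\<leftarrow>ds. [:- d, 1:]) \<noteq> 0" by (simp del: mult_pCons_left)
  hence "Polynomial.order x (\<Prod>d\<leftarrow>d # ds. [:- d, 1:]) = Polynomial.order x [:- d, 1:] + count_list ds x"
    using Cons.IH by (simp add: order_mult del: mult_pCons_left)
  thus ?case by (simp add: order_linear')
qed (simp add: order_0I)

lemma sum_count_list_filter:
  assumes "finite S"
  shows "(\<Sum>x\<in>S. count_list ds x) = length (filter (\<lambda>d. d \<in> S) ds)"
proof (induction ds)
  case (Cons d ds)
  have "(\<Sum>x\<in>S. count_list (d # ds) x) = (\<Sum>x\<in>S. of_bool (d = x) + count_list ds x)"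
    by (rule sum.cong) auto
  also have "\<dots> = of_bool (d \<in> S) + (\<Sum>x\<in>S. count_list ds x)"
    using assms by (simp add: sum.distrib)
  finally show ?case using Cons by simp
qed simp

lemma num_pos_eigenvalues_linear_factors:
  assumes "char_poly A = (\<Prod>d\<leftarrow>ds. [:- d, 1:])"
  shows "num_pos_eigenvalues A = length (filter (\<lambda>d. d > 0) ds)"
proof -
  have roots: "{x. x > 0 \<and> poly (char_poly A) x = 0} = {x \<in> set ds. x > 0}"
    unfolding assms poly_prod_list_zero_iff by auto
  have "num_pos_eigenvalues A = length (filter (\<lambda>d. d \<in> {x \<in> set ds. x > 0}) ds)"
    unfolding num_pos_eigenvalues_def roots unfolding assms order_prod_linear_factors
    by (rule sum_count_list_filter) simp
  also have "filter (\<lambda>d. d \<in> {x \<in> set ds. x > 0}) ds = filter (\<lambda>d. d > 0) ds"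
    by (rule filter_cong) auto
  finally show ?thesis .
qed

section \<open>Antiferromagnetic matrices\<close>

lemma quadratic_form_nonpos_on_hyperplane:
  fixes A :: "real mat"
  assumes A: "A \<in> carrier_mat n n" and sym: "A\<^sup>T = A" and pos: "num_pos_eigenvalues A \<le> 1"
  shows "\<exists>q \<in> carrier_vec n. \<forall>z \<in> carrier_vec n. q \<bullet> z = 0 \<longrightarrow> z \<bullet> (A *\<^sub>v z) \<le> 0"
proof -
  obtain W ds where W: "W \<in> carrier_mat n n" and WTW: "W\<^sup>T * W = 1\<^sub>m n" and WWT: "W * W\<^sup>T = 1\<^sub>m n"
    and ds: "length ds = n" and diag: "W\<^sup>T * A * W = mat_diag n (\<lambda>k. ds ! k)"
    using real_symmetric_orthogonally_diagonalizable[OF A sym] by blast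
  define S where "S = {k. k < n \<and> ds ! k > 0}"
  have "card S \<le> 1"
    using pos num_pos_eigenvalues_linear_factors[OF char_poly_orthogonal_diagonalization[OF A W WWT WTW ds diag]]
      length_filter_conv_card[of "\<lambda>d. d > 0" ds] ds
    unfolding S_def by simp
  hence S1: "\<forall>k\<in>S. \<forall>k'\<in>S. k = k'" using card_le_Suc0_iff_eq[of S] by (simp add: S_def)
  obtain k0 where "S \<subseteq> {k0}"
  proof (cases "S = {}")
    case False
    then obtain k0 where "k0 \<in> S" by blast
    with S1 have "S \<subseteq> {k0}" by blast
    thus ?thesis by (rule that)
  qed (use that in blast)
  hence k0: "\<And>k. k < n \<Longrightarrow> k \<noteq> k0 \<Longrightarrow> ds ! k \<le> 0" unfolding S_def by fastforce
  have "z \<bullet> (A *\<^sub>v z) \<le> 0" if z: "z \<in> carrier_vec n" and orth: "col W k0 \<bullet> z = 0" for z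
  proof -
    have "z \<bullet> (A *\<^sub>v z) = (\<Sum>k<n. ds ! k * (col W k \<bullet> z)\<^sup>2)"
      by (rule quadratic_form_orthogonal_diagonalization[OF A W WWT diag z])
    also have "\<dots> \<le> 0"
    proof (rule sum_nonpos)
      fix k assume "k \<in> {..<n}"
      thus "ds ! k * (col W k \<bullet> z)\<^sup>2 \<le> 0"
        using k0[of k] orth by (cases "k = k0") (auto intro: mult_nonpos_nonneg)
    qed
    finally show ?thesis .
  qed
  moreover have "col W k0 \<in> carrier_vec n" using W unfolding col_def by simp
  ultimately show ?thesis by blast
qed

lemma quadratic_form_lincomb:
  fixes A :: "real mat"
  assumes A: "A \<in> carrier_mat n n" and sym: "A\<^sup>T = A"
    and x: "x \<in> carrier_vec n" and y: "y \<in> carrier_vec n"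
  shows "(a \<cdot>\<^sub>v x + b \<cdot>\<^sub>v y) \<bullet> (A *\<^sub>v (a \<cdot>\<^sub>v x + b \<cdot>\<^sub>v y)) =
     a\<^sup>2 * (x \<bullet> (A *\<^sub>v x)) + 2 * a * b * (x \<bullet> (A *\<^sub>v y)) + b\<^sup>2 * (y \<bullet> (A *\<^sub>v y))"
proof -
  have Ax: "A *\<^sub>v x \<in> carrier_vec n" and Ay: "A *\<^sub>v y \<in> carrier_vec n" using A x y by auto
  have "A *\<^sub>v (a \<cdot>\<^sub>v x + b \<cdot>\<^sub>v y) = a \<cdot>\<^sub>v (A *\<^sub>v x) + b \<cdot>\<^sub>v (A *\<^sub>v y)"
    using A x y by (simp add: mult_add_distrib_mat_vec[of _ n n] mult_mat_vec[of _ n n])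
  moreover have "(a \<cdot>\<^sub>v x + b \<cdot>\<^sub>v y) \<bullet> (a \<cdot>\<^sub>v (A *\<^sub>v x) + b \<cdot>\<^sub>v (A *\<^sub>v y)) =
     a * a * (x \<bullet> (A *\<^sub>v x)) + a * b * (x \<bullet> (A *\<^sub>v y)) +
     b * a * (y \<bullet> (A *\<^sub>v x)) + b * b * (y \<bullet> (A *\<^sub>v y))"
    using x y Ax Ay
    by (simp add: add_scalar_prod_distrib[of _ n] scalar_prod_add_distrib[of _ n] algebra_simps)
  ultimately show ?thesis
    using symmetric_bilinear_form_commute[OF A sym x y] by (simp add: power2_eq_square algebra_simps)
qed

lemma reverse_Cauchy_Schwarz:
  fixes A :: "real mat"
  assumes A: "A \<in> carrier_mat n n" and sym: "A\<^sup>T = A" and pos: "num_pos_eigenvalues A \<le> 1"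
    and x: "x \<in> carrier_vec n" and y: "y \<in> carrier_vec n" and xAx: "x \<bullet> (A *\<^sub>v x) > 0"
  shows "(x \<bullet> (A *\<^sub>v x)) * (y \<bullet> (A *\<^sub>v y)) \<le> (x \<bullet> (A *\<^sub>v y))\<^sup>2"
proof (rule ccontr)
  assume "\<not> ?thesis"
  then have gap: "(x \<bullet> (A *\<^sub>v x)) * (y \<bullet> (A *\<^sub>v y)) - (x \<bullet> (A *\<^sub>v y))\<^sup>2 > 0" by simp
  obtain q where q: "q \<in> carrier_vec n"
    and neg: "\<And>z. z \<in> carrier_vec n \<Longrightarrow> q \<bullet> z = 0 \<Longrightarrow> z \<bullet> (A *\<^sub>v z) \<le> 0"
    using quadratic_form_nonpos_on_hyperplane[OF A sym pos] by blast
  define a b c where "a = x \<bullet> (A *\<^sub>v x)" and "b = x \<bullet> (A *\<^sub>v y)" and "c = y \<bullet> (A *\<^sub>v y)"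
  have qx: "q \<bullet> x \<noteq> 0" using neg[OF x] xAx by force
  txt \<open>\<open>z\<close> lies on the hyperplane where the form is nonpositive, yet \<open>a (z \<bullet> A z)\<close> is a
    square plus a positive term.\<close>
  define z where "z = (q \<bullet> y) \<cdot>\<^sub>v x + (- (q \<bullet> x)) \<cdot>\<^sub>v y"
  have z: "z \<in> carrier_vec n" using x y unfolding z_def by auto
  have "q \<bullet> z = 0"
    unfolding z_def using q x y by (simp add: scalar_prod_add_distrib[of _ n])
  hence "z \<bullet> (A *\<^sub>v z) \<le> 0" using neg z by blast
  hence "a * (z \<bullet> (A *\<^sub>v z)) \<le> 0" using xAx unfolding a_def by (simp add: mult_nonneg_nonpos)
  moreover have "a * (z \<bullet> (A *\<^sub>v z)) = (a * (q \<bullet> y) - b * (q \<bullet> x))\<^sup>2 + (a * c - b\<^sup>2) * (q \<bullet> x)\<^sup>2"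
    unfolding z_def quadratic_form_lincomb[OF A sym x y] a_def b_def c_def
    by (simp add: power2_eq_square algebra_simps)
  moreover have "(a * c - b\<^sup>2) * (q \<bullet> x)\<^sup>2 > 0" using gap qx unfolding a_def b_def c_def by simp
  moreover have "(a * (q \<bullet> y) - b * (q \<bullet> x))\<^sup>2 \<ge> 0" by simp
  ultimately show False by linarith
qed

lemma mult_unit_vec_col:
  assumes "(G :: 'a :: semiring_1 mat) \<in> carrier_mat nr n" "c < n"
  shows "G *\<^sub>v unit_vec n c = col G c"
  by (rule eq_vecI) (use assms in auto)

lemma unit_vec_bilinear_form:
  fixes G :: "real mat"
  assumes G: "G \<in> carrier_mat n n" and "a < n" "b < n" "c < n" "d < n"
  shows "(unit_vec n a + t \<cdot>\<^sub>v unit_vec n b) \<bullet> (G *\<^sub>v (unit_vec n c + s \<cdot>\<^sub>v unit_vec n d)) =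
     G $$ (a, c) + s * G $$ (a, d) + t * (G $$ (b, c) + s * G $$ (b, d))"
proof -
  have Gv: "G *\<^sub>v (unit_vec n c + s \<cdot>\<^sub>v unit_vec n d) = col G c + s \<cdot>\<^sub>v col G d"
    using G assms by (simp add: mult_add_distrib_mat_vec[of _ n n] mult_mat_vec[of _ n n] mult_unit_vec_col)
  show ?thesis unfolding Gv using G assms
    by (simp add: add_scalar_prod_distrib[of _ n] scalar_prod_add_distrib[of _ n]) (simp add: algebra_simps)
qed

lemma antiferromagneticD:
  assumes "antiferromagnetic n G"
  shows "G \<in> carrier_mat n n" "G\<^sup>T = G" "num_pos_eigenvalues G \<le> 1"
    and "\<And>i j. i < n \<Longrightarrow> j < n \<Longrightarrow> G $$ (i, j) \<ge> 0"
    and "\<And>i j. i < n \<Longrightarrow> j < n \<Longrightarrow> G $$ (j, i) = G $$ (i, j)"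
  using assms unfolding antiferromagnetic_def weighted_graph_def
  by (auto, metis carrier_matD index_transpose_mat(1))

text \<open>If \<open>G\<^sub>i\<^sub>k > 0\<close>, the vectors \<open>x = e\<^sub>i + e\<^sub>k\<close> and \<open>y = e\<^sub>j + s e\<^sub>l\<close> with small \<open>s > 0\<close>
  violate the reverse Cauchy--Schwarz inequality.\<close>

lemma antiferromagnetic_nonadjacency_trans:
  fixes G :: "real mat"
  assumes af: "antiferromagnetic n G"
    and i: "i < n" and j: "j < n" and k: "k < n" and l: "l < n"
    and jl: "G $$ (j, l) > 0" and ij: "G $$ (i, j) = 0" and jk: "G $$ (j, k) = 0"
  shows "G $$ (i, k) = 0"
proof (rule ccontr)
  assume "G $$ (i, k) \<noteq> 0"
  note G = antiferromagneticD(1)[OF af] and sym = antiferromagneticD(2)[OF af]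
    and pos = antiferromagneticD(3)[OF af] and nonneg = antiferromagneticD(4)[OF af]
    and symG = antiferromagneticD(5)[OF af]
  have ik: "G $$ (i, k) > 0" using \<open>G $$ (i, k) \<noteq> 0\<close> nonneg[OF i k] by simp
  define g h where "g = G $$ (j, l)" and "h = G $$ (i, l) + G $$ (k, l)"
  define x :: "real vec" where "x = unit_vec n i + 1 \<cdot>\<^sub>v unit_vec n k"
  define a where "a = x \<bullet> (G *\<^sub>v x)"
  have a_pos: "a > 0"
    using unit_vec_bilinear_form[OF G i k i k, of 1 1] ik nonneg[OF i i] nonneg[OF k k] nonneg[OF k i]
    unfolding a_def x_def by simp
  have g_pos: "g > 0" using jl g_def by simp
  define s where "s = a * g / (h\<^sup>2 + 1)"
  have h_pos: "h\<^sup>2 + 1 > 0" using zero_le_power2[of h] by linarith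
  have s_pos: "s > 0" unfolding s_def using a_pos g_pos h_pos by simp
  define y :: "real vec" where "y = unit_vec n j + s \<cdot>\<^sub>v unit_vec n l"
  have xGy: "x \<bullet> (G *\<^sub>v y) = s * h"
    unfolding x_def y_def h_def using unit_vec_bilinear_form[OF G i k j l, of 1 s] ij jk symG[OF j k]
    by (simp add: algebra_simps)
  have yGy: "y \<bullet> (G *\<^sub>v y) \<ge> 2 * s * g"
  proof -
    have "y \<bullet> (G *\<^sub>v y) = G $$ (j, j) + 2 * s * g + s\<^sup>2 * G $$ (l, l)"
      unfolding y_def g_def using unit_vec_bilinear_form[OF G j l j l, of s s] symG[OF j l]
      by (simp add: algebra_simps power2_eq_square)
    thus ?thesis using nonneg[OF j j] nonneg[OF l l] by simp
  qed
  have "a * (y \<bullet> (G *\<^sub>v y)) \<le> (s * h)\<^sup>2"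
    using reverse_Cauchy_Schwarz[OF G sym pos _ _ a_pos[unfolded a_def], of y] xGy
    unfolding a_def by (simp add: x_def y_def)
  also have "(s * h)\<^sup>2 = s * (a * g) * (h\<^sup>2 / (h\<^sup>2 + 1))"
    unfolding s_def by (simp add: power2_eq_square field_simps)
  also have "\<dots> \<le> s * (a * g)"
    using h_pos s_pos a_pos g_pos by (intro mult_left_le) simp_all
  also have "\<dots> < a * (2 * s * g)" using s_pos a_pos g_pos by simp
  also have "\<dots> \<le> a * (y \<bullet> (G *\<^sub>v y))" using yGy a_pos by simp
  finally show False by simp
qed

section \<open>Exponents of homomorphisms\<close>

definition exponent_vec :: "nat \<Rightarrow> (nat \<Rightarrow> nat) \<Rightarrow> nat \<Rightarrow> nat" where
  "exponent_vec t \<phi> i = card {v \<in> {0..<t}. \<phi> v = i}"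

definition homs :: "nat \<Rightarrow> (nat \<times> nat) set \<Rightarrow> nat \<Rightarrow> (nat \<Rightarrow> nat \<Rightarrow> bool) \<Rightarrow> (nat \<Rightarrow> nat) set" where
  "homs t E n adj = {\<phi> \<in> {0..<t} \<rightarrow>\<^sub>E {0..<n}. \<forall>(u, v) \<in> E. adj (\<phi> u) (\<phi> v)}"

definition hom_exponents :: "nat \<Rightarrow> (nat \<times> nat) set \<Rightarrow> nat \<Rightarrow> (nat \<Rightarrow> nat \<Rightarrow> bool) \<Rightarrow> (nat \<Rightarrow> nat) set" where
  "hom_exponents t E n adj = exponent_vec t ` homs t E n adj"

lemma exponent_vec_pos_iff: "exponent_vec t \<phi> i > 0 \<longleftrightarrow> (\<exists>v<t. \<phi> v = i)"
  unfolding exponent_vec_def by (auto simp: card_gt_0_iff)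

lemma exponent_vec_cong: "(\<And>v. v < t \<Longrightarrow> \<phi> v = \<psi> v) \<Longrightarrow> exponent_vec t \<phi> = exponent_vec t \<psi>"
  unfolding exponent_vec_def by (intro ext arg_cong[where f = card]) auto

lemma exponent_vec_fun_upd:
  assumes u: "u < t" and j: "j \<noteq> \<phi> u"
  shows "exponent_vec t (\<phi>(u := j)) =
    (exponent_vec t \<phi>)(\<phi> u := exponent_vec t \<phi> (\<phi> u) - 1, j := exponent_vec t \<phi> j + 1)"
proof
  fix x :: nat
  let ?V = "\<lambda>\<psi>. {v \<in> {0..<t}. \<psi> v = x}"
  consider "x = j" | "x = \<phi> u" | "x \<noteq> j" "x \<noteq> \<phi> u" by blast
  thus "exponent_vec t (\<phi>(u := j)) x = ((exponent_vec t \<phi>)(\<phi> u := exponent_vec t \<phi> (\<phi> u) - 1,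
      j := exponent_vec t \<phi> j + 1)) x"
  proof cases
    case 1
    hence "?V (\<phi>(u := j)) = insert u (?V \<phi>)" "u \<notin> ?V \<phi>" using u j by auto
    thus ?thesis using 1 unfolding exponent_vec_def by simp
  next
    case 2
    hence "?V (\<phi>(u := j)) = ?V \<phi> - {u}" "u \<in> ?V \<phi>" using u j by auto
    thus ?thesis using 2 j unfolding exponent_vec_def by simp
  next
    case 3
    hence "?V (\<phi>(u := j)) = ?V \<phi>" by auto
    thus ?thesis using 3 unfolding exponent_vec_def by simp
  qed
qed

lemma homsI:
  assumes "\<And>v. v < t \<Longrightarrow> \<phi> v < n" "\<And>v. v \<ge> t \<Longrightarrow> \<phi> v = undefined"
    and "\<And>u v. (u, v) \<in> E \<Longrightarrow> adj (\<phi> u) (\<phi> v)"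
  shows "\<phi> \<in> homs t E n adj"
  using assms unfolding homs_def by (auto simp: PiE_def Pi_def extensional_def)

lemma homsD:
  assumes "\<phi> \<in> homs t E n adj"
  shows "\<And>v. v < t \<Longrightarrow> \<phi> v < n" "\<And>v. v \<ge> t \<Longrightarrow> \<phi> v = undefined"
    and "\<And>u v. (u, v) \<in> E \<Longrightarrow> adj (\<phi> u) (\<phi> v)"
  using assms unfolding homs_def by (auto simp: PiE_def Pi_def extensional_def)

lemma hom_exponents_vanish:
  assumes "a \<in> hom_exponents t E n adj" and "i \<ge> n"
  shows "a i = 0"
  using assms homsD(1) unfolding hom_exponents_def exponent_vec_def by fastforce

lemma homs_fun_upd:
  assumes "\<phi> \<in> homs t E n adj" "u < t" "y < n" and loopless: "\<And>v. (v, v) \<notin> E"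
    and "\<And>w. (u, w) \<in> E \<Longrightarrow> adj y (\<phi> w)" "\<And>w. (w, u) \<in> E \<Longrightarrow> adj (\<phi> w) y"
  shows "\<phi>(u := y) \<in> homs t E n adj"
proof (rule homsI)
  fix a b assume e: "(a, b) \<in> E"
  show "adj ((\<phi>(u := y)) a) ((\<phi>(u := y)) b)"
    using e loopless[of a] assms(5,6) homsD(3)[OF assms(1) e] by (cases "a = u"; cases "b = u") auto
qed (use assms homsD[OF assms(1)] in auto)

lemma homs_cong:
  assumes "\<And>i j. i < n \<Longrightarrow> j < n \<Longrightarrow> adj i j = adj' i j" and "E \<subseteq> {0..<t} \<times> {0..<t}"
  shows "homs t E n adj = homs t E n adj'"
proof -
  have "adj (\<phi> u) (\<phi> v) = adj' (\<phi> u) (\<phi> v)" if "\<phi> \<in> {0..<t} \<rightarrow>\<^sub>E {0..<n}" "(u, v) \<in> E" for \<phi> u v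
    using that assms by (auto simp: PiE_def Pi_def)
  thus ?thesis unfolding homs_def by blast
qed

text \<open>No cancellation occurs in \<open>hcoeff\<close>, since all its terms are nonnegative.\<close>

lemma hcoeff_nonzero_iff:
  assumes E: "E \<subseteq> {0..<t} \<times> {0..<t}" and nonneg: "\<forall>i<n. \<forall>j<n. G $$ (i, j) \<ge> 0"
  shows "hcoeff t E n G a \<noteq> 0 \<longleftrightarrow>
    (\<exists>\<phi> \<in> homs t E n (\<lambda>i j. G $$ (i, j) > 0). \<forall>i<n. exponent_vec t \<phi> i = a i)"
proof -
  have finE: "finite E" using E finite_subset by blast
  have entry_nonneg: "G $$ (\<phi> u, \<phi> v) \<ge> 0" if "\<phi> \<in> {0..<t} \<rightarrow>\<^sub>E {0..<n}" "(u, v) \<in> E" for \<phi> u v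
    using that nonneg E by (auto simp: PiE_def Pi_def)
  have term_nonzero: "(\<Prod>(u, v)\<in>E. G $$ (\<phi> u, \<phi> v)) \<noteq> 0 \<longleftrightarrow> (\<forall>(u, v)\<in>E. G $$ (\<phi> u, \<phi> v) > 0)"
    if "\<phi> \<in> {0..<t} \<rightarrow>\<^sub>E {0..<n}" for \<phi>
    using finE entry_nonneg[OF that] by (auto simp: prod_zero_iff less_le)
  have "hcoeff t E n G a \<noteq> 0 \<longleftrightarrow> (\<exists>\<phi>\<in>{0..<t} \<rightarrow>\<^sub>E {0..<n}.
      (\<forall>i<n. exponent_vec t \<phi> i = a i) \<and> (\<Prod>(u, v)\<in>E. G $$ (\<phi> u, \<phi> v)) \<noteq> 0)"
    unfolding hcoeff_def exponent_vec_def
    by (subst sum_nonneg_eq_0_iff) (auto intro!: prod_nonneg simp: finite_PiE entry_nonneg)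
  thus ?thesis using term_nonzero unfolding homs_def by blast
qed

lemma hsupport_eq_hom_exponents:
  assumes E: "E \<subseteq> {0..<t} \<times> {0..<t}" and nonneg: "\<forall>i<n. \<forall>j<n. G $$ (i, j) \<ge> 0"
  shows "hsupport t E n G = hom_exponents t E n (\<lambda>i j. G $$ (i, j) > 0)"
proof (intro Set.set_eqI iffI)
  let ?P = "\<lambda>i j. G $$ (i, j) > 0"
  fix a assume "a \<in> hsupport t E n G"
  then obtain \<phi> where \<phi>: "\<phi> \<in> homs t E n ?P" "\<forall>i<n. exponent_vec t \<phi> i = a i"
    and a0: "\<forall>i\<ge>n. a i = 0" unfolding hsupport_def using hcoeff_nonzero_iff[OF assms] by blast
  have \<phi>0: "\<forall>i\<ge>n. exponent_vec t \<phi> i = 0"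
    using \<phi>(1) hom_exponents_vanish unfolding hom_exponents_def by blast
  have "a = exponent_vec t \<phi>"
  proof
    fix i show "a i = exponent_vec t \<phi> i" using \<phi>(2) a0 \<phi>0 by (cases "i < n") auto
  qed
  thus "a \<in> hom_exponents t E n ?P" using \<phi>(1) unfolding hom_exponents_def by blast
next
  fix a assume a: "a \<in> hom_exponents t E n (\<lambda>i j. G $$ (i, j) > 0)"
  then obtain \<phi> where "\<phi> \<in> homs t E n (\<lambda>i j. G $$ (i, j) > 0)" "a = exponent_vec t \<phi>"
    unfolding hom_exponents_def by blast
  thus "a \<in> hsupport t E n G"
    using hcoeff_nonzero_iff[OF assms] hom_exponents_vanish[OF a] unfolding hsupport_def by auto
qed

lemma hsupport_complete_graph:
  assumes "E \<subseteq> {0..<t} \<times> {0..<t}"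
  shows "hsupport t E q (complete_graph q) = hom_exponents t E q (\<noteq>)"
proof -
  have "\<forall>i<q. \<forall>j<q. complete_graph q $$ (i, j) \<ge> 0" by (simp add: complete_graph_def)
  moreover have "homs t E q (\<lambda>i j. complete_graph q $$ (i, j) > 0) = homs t E q (\<noteq>)"
    by (rule homs_cong[OF _ assms]) (simp add: complete_graph_def)
  ultimately show ?thesis using hsupport_eq_hom_exponents[OF assms] unfolding hom_exponents_def by simp
qed

lemma M_convex_face:
  assumes "M_convex S"
  shows "M_convex {a \<in> S. \<forall>i\<in>I. a i = 0}"
  unfolding M_convex_def
proof (intro ballI allI impI)
  fix a b i assume a: "a \<in> {a \<in> S. \<forall>i\<in>I. a i = 0}" and b: "b \<in> {a \<in> S. \<forall>i\<in>I. a i = 0}" and i: "a i > b i"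
  then obtain j where j: "a j < b j" and a': "a(i := a i - 1, j := a j + 1) \<in> S"
    using assms unfolding M_convex_def by blast
  have "i \<notin> I" "j \<notin> I" using a b i j by auto
  thus "\<exists>j. a j < b j \<and> a(i := a i - 1, j := a j + 1) \<in> {a \<in> S. \<forall>i\<in>I. a i = 0}"
    using j a' a by auto
qed

lemma hom_exponents_fewer_colours:
  assumes "N \<le> q"
  shows "hom_exponents t E N adj = {a \<in> hom_exponents t E q adj. \<forall>i\<in>{N..}. a i = 0}"
proof (intro Set.set_eqI iffI)
  fix a assume a: "a \<in> hom_exponents t E N adj"
  then obtain \<phi> where "\<phi> \<in> homs t E N adj" "a = exponent_vec t \<phi>" unfolding hom_exponents_def by blast
  moreover from this have "\<phi> \<in> homs t E q adj" using assms by (auto intro!: homsI dest: homsD)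
  ultimately show "a \<in> {a \<in> hom_exponents t E q adj. \<forall>i\<in>{N..}. a i = 0}"
    using hom_exponents_vanish[OF a] unfolding hom_exponents_def by auto
next
  fix a assume "a \<in> {a \<in> hom_exponents t E q adj. \<forall>i\<in>{N..}. a i = 0}"
  then obtain \<phi> where \<phi>: "\<phi> \<in> homs t E q adj" and a: "a = exponent_vec t \<phi>"
    and a0: "\<forall>i\<ge>N. a i = 0" unfolding hom_exponents_def by auto
  have "\<phi> v < N" if "v < t" for v
    using a0 a exponent_vec_pos_iff[of t \<phi> "\<phi> v"] that by (metis less_numeral_extra(3) not_le)
  hence "\<phi> \<in> homs t E N adj" using \<phi> by (auto intro!: homsI dest: homsD)
  thus "a \<in> hom_exponents t E N adj" using a unfolding hom_exponents_def by blast
qed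

lemma M_convex_fewer_colours:
  assumes "M_convex (hom_exponents t E q adj)" and "N \<le> q"
  shows "M_convex (hom_exponents t E N adj)"
  unfolding hom_exponents_fewer_colours[OF assms(2)] using M_convex_face[OF assms(1)] .

lemma exponent_vec_comp_bij:
  assumes "bij g"
  shows "exponent_vec t (g \<circ> \<phi>) = exponent_vec t \<phi> \<circ> Hilbert_Choice.inv g"
proof
  fix i
  have "{v \<in> {0..<t}. g (\<phi> v) = i} = {v \<in> {0..<t}. \<phi> v = Hilbert_Choice.inv g i}"
    using assms by (auto simp: bij_inv_eq_iff)
  thus "exponent_vec t (g \<circ> \<phi>) i = (exponent_vec t \<phi> \<circ> Hilbert_Choice.inv g) i" unfolding exponent_vec_def by simp
qed

lemma colouring_exponents_permute:
  assumes E: "E \<subseteq> {0..<t} \<times> {0..<t}"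
    and p: "p permutes {0..<N}" and a: "a \<in> hom_exponents t E N (\<noteq>)"
  shows "a \<circ> p \<in> hom_exponents t E N (\<noteq>)"
proof -
  obtain \<phi> where \<phi>: "\<phi> \<in> homs t E N (\<noteq>)" and a_eq: "a = exponent_vec t \<phi>"
    using a unfolding hom_exponents_def by blast
  have invp: "Hilbert_Choice.inv p permutes {0..<N}" using permutes_inv[OF p] .
  define \<psi> where "\<psi> = restrict (Hilbert_Choice.inv p \<circ> \<phi>) {0..<t}"
  have "\<psi> \<in> homs t E N (\<noteq>)"
  proof (rule homsI)
    show "\<psi> v < N" if "v < t" for v
      using that homsD(1)[OF \<phi>] permutes_in_image[OF invp] unfolding \<psi>_def by simp
    show "\<psi> u \<noteq> \<psi> v" if e: "(u, v) \<in> E" for u v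
    proof -
      have "u < t" "v < t" using E e by auto
      thus ?thesis using homsD(3)[OF \<phi> e] permutes_inj[OF invp] unfolding \<psi>_def
        by (simp add: inj_eq)
    qed
  qed (simp add: \<psi>_def)
  moreover have "exponent_vec t \<psi> = a \<circ> p"
    using exponent_vec_comp_bij[OF permutes_bij[OF invp], of t \<phi>] exponent_vec_cong[of t \<psi> "Hilbert_Choice.inv p \<circ> \<phi>"]
    unfolding a_eq \<psi>_def by (simp add: inv_inv_eq permutes_bij[OF p])
  ultimately show ?thesis unfolding hom_exponents_def by (metis image_eqI)
qed

lemma permutes_onto_initial_segment:
  assumes B: "B \<subseteq> {0..<N}"
  shows "\<exists>p. p permutes {0..<N} \<and> p ` {0..<card B} = B"
proof -
  let ?k = "card B"
  have finB: "finite B" using B finite_subset by blast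
  have k: "?k \<le> N" using card_mono[OF _ B] by simp
  obtain f where f: "bij_betw f {0..<?k} B" using ex_bij_betw_nat_finite[OF finB] by blast
  have "card {?k..<N} = card ({0..<N} - B)" using B finB by (simp add: card_Diff_subset)
  then obtain g where g: "bij_betw g {?k..<N} ({0..<N} - B)" by (metis bij_betw_iff_card finite_Diff finite_atLeastLessThan)
  define p where "p x = (if x < ?k then f x else if x < N then g x else x)" for x
  have "bij_betw p {0..<?k} B" using f by (subst bij_betw_cong[where g = f]) (auto simp: p_def)
  moreover have "bij_betw p {?k..<N} ({0..<N} - B)" using g by (subst bij_betw_cong[where g = g]) (auto simp: p_def)
  ultimately have "bij_betw p ({0..<?k} \<union> {?k..<N}) (B \<union> ({0..<N} - B))"
    by (rule bij_betw_combine) blast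
  moreover have "{0..<?k} \<union> {?k..<N} = {0..<N}" "B \<union> ({0..<N} - B) = {0..<N}" using k B by auto
  ultimately have "p permutes {0..<N}" by (intro bij_imp_permutes) (auto simp: p_def)
  moreover have "p ` {0..<?k} = B" using f unfolding bij_betw_def p_def by auto
  ultimately show ?thesis by blast
qed

lemma hom_exponents_support:
  assumes a: "a \<in> hom_exponents t E N adj"
  shows "{x. a x > 0} \<subseteq> {0..<N}" and "card {x. a x > 0} \<le> t"
proof -
  obtain \<phi> where a_eq: "a = exponent_vec t \<phi>" using a unfolding hom_exponents_def by blast
  show "{x. a x > 0} \<subseteq> {0..<N}"
  proof
    fix x assume "x \<in> {x. a x > 0}"
    thus "x \<in> {0..<N}" using hom_exponents_vanish[OF a, of x] by (cases "x < N") auto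
  qed
  have "{x. a x > 0} \<subseteq> \<phi> ` {0..<t}" using exponent_vec_pos_iff[of t \<phi>] unfolding a_eq by auto
  hence "card {x. a x > 0} \<le> card (\<phi> ` {0..<t})" by (intro card_mono) auto
  also have "\<dots> \<le> t" using card_image_le[of "{0..<t}" \<phi>] by simp
  finally show "card {x. a x > 0} \<le> t" .
qed

lemma colouring_exponents_recolour:
  assumes E: "E \<subseteq> {0..<t} \<times> {0..<t}" and a: "a \<in> hom_exponents t E N (\<noteq>)"
    and i: "a i > 0" and j: "a j = 0" "j < N"
  shows "a(i := a i - 1, j := a j + 1) \<in> hom_exponents t E N (\<noteq>)"
proof -
  obtain \<phi> where \<phi>: "\<phi> \<in> homs t E N (\<noteq>)" and a_eq: "a = exponent_vec t \<phi>"
    using a unfolding hom_exponents_def by blast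
  obtain u where u: "u < t" "\<phi> u = i" using i exponent_vec_pos_iff[of t \<phi> i] unfolding a_eq by auto
  have unused: "\<phi> v \<noteq> j" if "v < t" for v
    using j(1) exponent_vec_pos_iff[of t \<phi> j] that unfolding a_eq by auto
  have "\<phi>(u := j) \<in> homs t E N (\<noteq>)"
    by (rule homs_fun_upd[OF \<phi> u(1) j(2)]) (use E unused homsD(3)[OF \<phi>] in fastforce)+
  moreover have "exponent_vec t (\<phi>(u := j)) = a(i := a i - 1, j := a j + 1)"
    using exponent_vec_fun_upd[OF u(1), of j \<phi>] unused[OF u(1)] unfolding a_eq u(2) by simp
  ultimately show ?thesis unfolding hom_exponents_def by (metis image_eqI)
qed

text \<open>If the support of \<open>b\<close> lies in that of \<open>a\<close>, which has at most \<open>t \<le> q\<close> elements, permute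
  the colours so that both supports lie among the first \<open>q\<close> colours and exchange there.\<close>

lemma colouring_exchange_nested_supports:
  assumes E: "E \<subseteq> {0..<t} \<times> {0..<t}" and M: "M_convex (hom_exponents t E q (\<noteq>))"
    and t: "t \<le> q" and q: "q \<le> N"
    and a: "a \<in> hom_exponents t E N (\<noteq>)" and b: "b \<in> hom_exponents t E N (\<noteq>)"
    and ab: "a i > b i" and nested: "\<And>x. b x > 0 \<Longrightarrow> a x > 0"
  shows "\<exists>j. a j < b j \<and> a(i := a i - 1, j := a j + 1) \<in> hom_exponents t E N (\<noteq>)"
proof -
  let ?C = "\<lambda>N. hom_exponents t E N (\<noteq>)" and ?B = "{x. a x > 0}"
  obtain p where p: "p permutes {0..<N}" and pB: "p ` {0..<card ?B} = ?B"
    using permutes_onto_initial_segment[OF hom_exponents_support(1)[OF a]] by blast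
  have p_inv: "Hilbert_Choice.inv p permutes {0..<N}" using permutes_inv[OF p] .
  have a_vanish: "a (p x) = 0" if "x \<ge> q" for x
  proof (rule ccontr)
    assume "a (p x) \<noteq> 0"
    hence "p x \<in> p ` {0..<card ?B}" unfolding pB by simp
    hence "x < card ?B" using permutes_inj[OF p] by (simp add: inj_image_mem_iff)
    thus False using hom_exponents_support(2)[OF a] t that by simp
  qed
  have b_vanish: "b (p x) = 0" if "x \<ge> q" for x
    using nested[of "p x"] a_vanish[OF that] by (metis less_irrefl neq0_conv)
  have a': "a \<circ> p \<in> ?C q" and b': "b \<circ> p \<in> ?C q"
    unfolding hom_exponents_fewer_colours[OF q]
    using colouring_exponents_permute[OF E p] a b a_vanish b_vanish by auto
  let ?i = "Hilbert_Choice.inv p i"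
  have "(a \<circ> p) ?i > (b \<circ> p) ?i" using ab by (simp add: permutes_inverses(1)[OF p])
  then obtain j where j: "(a \<circ> p) j < (b \<circ> p) j"
    and c: "(a \<circ> p)(?i := (a \<circ> p) ?i - 1, j := (a \<circ> p) j + 1) \<in> ?C q"
    using M[unfolded M_convex_def, rule_format, OF a' b'] by blast
  have "(a \<circ> p)(?i := (a \<circ> p) ?i - 1, j := (a \<circ> p) j + 1) \<in> ?C N"
    using c unfolding hom_exponents_fewer_colours[OF q] by simp
  hence "(a \<circ> p)(?i := (a \<circ> p) ?i - 1, j := (a \<circ> p) j + 1) \<circ> Hilbert_Choice.inv p \<in> ?C N"
    by (rule colouring_exponents_permute[OF E p_inv])
  also have "(a \<circ> p)(?i := (a \<circ> p) ?i - 1, j := (a \<circ> p) j + 1) \<circ> Hilbert_Choice.inv p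
      = a(i := a i - 1, p j := a (p j) + 1)"
    by (auto simp: fun_eq_iff permutes_inv_eq[OF p] permutes_inverses[OF p])
  finally have "a(i := a i - 1, p j := a (p j) + 1) \<in> ?C N" .
  moreover have "a (p j) < b (p j)" using j by simp
  ultimately show ?thesis by blast
qed

lemma M_convex_more_colours:
  assumes E: "E \<subseteq> {0..<t} \<times> {0..<t}" and M: "M_convex (hom_exponents t E q (\<noteq>))"
    and t: "t \<le> q" and q: "q \<le> N"
  shows "M_convex (hom_exponents t E N (\<noteq>))"
  unfolding M_convex_def
proof (intro ballI allI impI)
  fix a b i assume a: "a \<in> hom_exponents t E N (\<noteq>)" and b: "b \<in> hom_exponents t E N (\<noteq>)"
    and ab: "a i > b i"
  show "\<exists>j. a j < b j \<and> a(i := a i - 1, j := a j + 1) \<in> hom_exponents t E N (\<noteq>)"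
  proof (cases "\<exists>j. a j = 0 \<and> b j > 0")
    case True
    then obtain j where j: "a j = 0" "b j > 0" by blast
    have "j < N" using hom_exponents_support(1)[OF b] j(2) by auto
    thus ?thesis using colouring_exponents_recolour[OF E a _ j(1)] ab j by (intro exI[of _ j]) simp
  next
    case False
    hence "a x > 0" if "b x > 0" for x using that by auto
    thus ?thesis using colouring_exchange_nested_supports[OF E M t q a b ab] by blast
  qed
qed

lemma M_convex_colourings:
  assumes "E \<subseteq> {0..<t} \<times> {0..<t}" and "M_convex (hom_exponents t E q (\<noteq>))" and "t \<le> q"
  shows "M_convex (hom_exponents t E N (\<noteq>))"
  using M_convex_fewer_colours[OF assms(2)] M_convex_more_colours[OF assms] by (cases "N \<le> q") auto

lemma card_fibres_sum:
  assumes "\<And>u. u < t \<Longrightarrow> \<phi> u \<in> X" and "finite X"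
  shows "card {u \<in> {0..<t}. f (\<phi> u) = z} = (\<Sum>x \<in> {x \<in> X. f x = z}. exponent_vec t \<phi> x)"
proof -
  have "card {u \<in> {0..<t}. f (\<phi> u) = z} = (\<Sum>x \<in> {x \<in> X. f x = z}. card {u \<in> {0..<t}. f (\<phi> u) = z \<and> \<phi> u = x})"
    using assms by (subst card_UN_disjoint[symmetric]) (auto intro!: arg_cong[where f = card])
  also have "\<dots> = (\<Sum>x \<in> {x \<in> X. f x = z}. exponent_vec t \<phi> x)"
    unfolding exponent_vec_def by (intro sum.cong refl arg_cong[where f = card]) auto
  finally show ?thesis .
qed

lemma sum_fun_upd_exchange:
  fixes f :: "'a \<Rightarrow> nat"
  assumes "finite X" "f k \<ge> 1" "k \<noteq> m"
  shows "(\<Sum>y\<in>X. (f(k := f k - 1, m := f m + 1)) y) + of_bool (k \<in> X)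
       = (\<Sum>y\<in>X. f y) + of_bool (m \<in> X)"
proof -
  define g where "g = f(k := f k - 1, m := f m + 1)"
  have "int (g y) = int (f y) - of_bool (y = k) + of_bool (y = m)" for y
    unfolding g_def using assms(2,3) by auto
  hence "int (\<Sum>y\<in>X. g y) = int (\<Sum>y\<in>X. f y) - of_bool (k \<in> X) + of_bool (m \<in> X)"
    using assms(1) by (simp add: of_nat_sum sum.distrib sum_subtractf)
  hence "int ((\<Sum>y\<in>X. g y) + of_bool (k \<in> X)) = int ((\<Sum>y\<in>X. f y) + of_bool (m \<in> X))"
    by simp
  thus ?thesis unfolding g_def by (simp only: of_nat_eq_iff)
qed

section \<open>Homomorphisms into the support graph\<close>

text \<open>The axioms on \<open>adj\<close> are those of the support graph of an antiferromagnetic matrix.\<close>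

locale multipartite_target =
  fixes t :: nat and E :: "(nat \<times> nat) set" and n :: nat and adj :: "nat \<Rightarrow> nat \<Rightarrow> bool"
  assumes edges: "E \<subseteq> {(u, v). u < v \<and> v < t}"
    and no_isolated: "\<And>u. u < t \<Longrightarrow> \<exists>v. (u, v) \<in> E \<or> (v, u) \<in> E"
    and adj_sym: "\<And>x y. x < n \<Longrightarrow> y < n \<Longrightarrow> adj x y = adj y x"
    and nonadj_trans: "\<And>x y z. x < n \<Longrightarrow> y < n \<Longrightarrow> z < n \<Longrightarrow> (\<exists>l<n. adj y l) \<Longrightarrow>
      \<not> adj x y \<Longrightarrow> \<not> adj y z \<Longrightarrow> \<not> adj x z"
begin

abbreviation H where "H \<equiv> homs t E n adj"

definition active :: "nat \<Rightarrow> bool" where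
  "active x \<longleftrightarrow> x < n \<and> (\<exists>l<n. adj x l)"

text \<open>On the active vertices, the looped ones are adjacent to everything, and the unlooped ones
  split into independent classes, completely joined to each other. The block of a vertex is \<open>n\<close>
  if it is looped, and otherwise the least element \<open>rep x\<close> of its class.\<close>

definition rep :: "nat \<Rightarrow> nat" where
  "rep x = (LEAST z. active z \<and> \<not> adj x z)"

definition block :: "nat \<Rightarrow> nat" where
  "block x = (if adj x x then n else rep x)"

definition block_count :: "(nat \<Rightarrow> nat) \<Rightarrow> nat \<Rightarrow> nat" where
  "block_count \<phi> z = card {u \<in> {0..<t}. block (\<phi> u) = z}"

lemma finite_active: "finite {x. active x}"
  unfolding active_def by auto

lemma edge_bounds: "(u, v) \<in> E \<Longrightarrow> u < t \<and> v < t \<and> u \<noteq> v"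
  using edges by auto

lemma active_nonadj_trans: "active x \<Longrightarrow> active y \<Longrightarrow> active z \<Longrightarrow> \<not> adj x y \<Longrightarrow> \<not> adj y z \<Longrightarrow> \<not> adj x z"
  using nonadj_trans unfolding active_def by blast

lemma active_adj_sym: "active x \<Longrightarrow> active y \<Longrightarrow> adj x y = adj y x"
  using adj_sym unfolding active_def by blast

lemma hom_active:
  assumes \<phi>: "\<phi> \<in> H" and u: "u < t"
  shows "active (\<phi> u)"
proof -
  obtain v where "(u, v) \<in> E \<or> (v, u) \<in> E" using no_isolated[OF u] by blast
  thus ?thesis
  proof
    assume e: "(u, v) \<in> E"
    thus ?thesis using homsD(1,3)[OF \<phi>] edge_bounds[OF e] u unfolding active_def by blast
  next
    assume e: "(v, u) \<in> E"
    thus ?thesis using homsD(1,3)[OF \<phi>] edge_bounds[OF e] u adj_sym unfolding active_def by metis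
  qed
qed

lemma exponent_active: "\<phi> \<in> H \<Longrightarrow> exponent_vec t \<phi> x > 0 \<Longrightarrow> active x"
  using exponent_vec_pos_iff hom_active by metis

lemma looped_adj: "active x \<Longrightarrow> active y \<Longrightarrow> adj x x \<Longrightarrow> adj x y"
  using active_nonadj_trans[of x y x] active_adj_sym[of x y] by blast

lemma rep_props:
  assumes "active x" "\<not> adj x x"
  shows "active (rep x)" "\<not> adj x (rep x)" "rep x \<le> x"
proof -
  have ex: "active x \<and> \<not> adj x x" using assms by simp
  show "active (rep x)" "\<not> adj x (rep x)"
    unfolding rep_def using LeastI[of "\<lambda>z. active z \<and> \<not> adj x z", OF ex] by auto
  show "rep x \<le> x" unfolding rep_def using Least_le[of "\<lambda>z. active z \<and> \<not> adj x z", OF ex] .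
qed

lemma rep_less: "active x \<Longrightarrow> \<not> adj x x \<Longrightarrow> rep x < n"
  using rep_props unfolding active_def by fastforce

lemma rep_eq:
  assumes "active x" "active y" "\<not> adj x y"
  shows "rep x = rep y"
proof -
  have "(\<lambda>z. active z \<and> \<not> adj x z) = (\<lambda>z. active z \<and> \<not> adj y z)"
  proof
    fix z
    have "active z \<Longrightarrow> \<not> adj x z \<Longrightarrow> \<not> adj y z"
      using active_nonadj_trans[of y x z] active_adj_sym[of x y] assms by blast
    moreover have "active z \<Longrightarrow> \<not> adj y z \<Longrightarrow> \<not> adj x z"
      using active_nonadj_trans[of x y z] assms by blast
    ultimately show "(active z \<and> \<not> adj x z) = (active z \<and> \<not> adj y z)" by blast
  qed
  thus ?thesis unfolding rep_def by simp
qed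

lemma rep_eq_imp_nonadj:
  assumes "active x" "active y" "\<not> adj x x" "\<not> adj y y" "rep x = rep y"
  shows "\<not> adj x y"
proof -
  have r: "active (rep x)" "\<not> adj x (rep x)" "\<not> adj y (rep x)" using rep_props assms by metis+
  hence "\<not> adj (rep x) y" using active_adj_sym[of y "rep x"] assms by simp
  thus ?thesis using active_nonadj_trans[of x "rep x" y] r assms by blast
qed

lemma rep_idem:
  assumes "active x" "\<not> adj x x"
  shows "\<not> adj (rep x) (rep x)" "rep (rep x) = rep x"
proof -
  have r: "active (rep x)" "\<not> adj x (rep x)" using rep_props assms by auto
  hence r2: "\<not> adj (rep x) x" using active_adj_sym assms by blast
  show "\<not> adj (rep x) (rep x)" using active_nonadj_trans[of "rep x" x "rep x"] r r2 assms by blast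
  show "rep (rep x) = rep x" using rep_eq[of "rep x" x] r r2 assms by simp
qed

lemma block_eq_n_iff: "active x \<Longrightarrow> block x = n \<longleftrightarrow> adj x x"
  unfolding block_def using rep_less[of x] by auto

lemma block_unlooped: "active x \<Longrightarrow> \<not> adj x x \<Longrightarrow> block x = rep x \<and> rep x < n"
  unfolding block_def using rep_less by auto

lemma same_block_cases:
  assumes "active x" "active y" "block x = block y"
  shows "adj y y \<or> \<not> adj x y"
proof (cases "adj y y")
  case False
  hence "block y = rep y" "rep y < n" using block_unlooped assms by auto
  hence "\<not> adj x x" using assms block_eq_n_iff[OF assms(1)] by simp
  hence "rep x = rep y" using assms block_unlooped False by auto
  thus ?thesis using rep_eq_imp_nonadj assms False \<open>\<not> adj x x\<close> by blast
qed simp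

lemma hom_move:
  assumes \<phi>: "\<phi> \<in> H" and u: "u < t" and y: "active y" and c: "adj y y \<or> \<not> adj (\<phi> u) y"
  shows "\<phi>(u := y) \<in> H"
proof -
  have adj_y: "adj y (\<phi> w)" if "w < t" "adj (\<phi> u) (\<phi> w)" for w
  proof (rule ccontr)
    assume "\<not> adj y (\<phi> w)"
    moreover have "active (\<phi> w)" "active (\<phi> u)" using hom_active[OF \<phi>] that u by auto
    ultimately show False
      using c looped_adj[OF y] active_nonadj_trans[of "\<phi> u" y "\<phi> w"] y that(2) by blast
  qed
  show ?thesis
  proof (rule homs_fun_upd[OF \<phi> u])
    show "y < n" using y unfolding active_def by simp
    show "(v, v) \<notin> E" for v using edge_bounds by blast
    show "adj y (\<phi> w)" if "(u, w) \<in> E" for w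
      using adj_y homsD(3)[OF \<phi> that] edge_bounds[OF that] by blast
    show "adj (\<phi> w) y" if "(w, u) \<in> E" for w
      using adj_y homsD(3)[OF \<phi> that] edge_bounds[OF that] hom_active[OF \<phi>] y u active_adj_sym
      by metis
  qed
qed

lemma block_count_eq_sum:
  assumes "\<phi> \<in> H"
  shows "block_count \<phi> z = (\<Sum>x \<in> {x. active x \<and> block x = z}. exponent_vec t \<phi> x)"
  unfolding block_count_def
  using card_fibres_sum[of t \<phi> "{x. active x}" block z] hom_active[OF assms] finite_active by simp

lemma finite_block: "finite {x. active x \<and> block x = z}"
  using finite_active by (simp add: Collect_conj_eq)

lemma exponent_eq_of_block_sums:
  assumes \<phi>: "\<phi> \<in> H" and supp: "\<And>x. a x > 0 \<Longrightarrow> active x"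
    and sums: "\<And>z. (\<Sum>x \<in> {x. active x \<and> block x = z}. a x) = block_count \<phi> z"
    and le: "\<And>x. active x \<Longrightarrow> exponent_vec t \<phi> x \<le> a x"
  shows "a = exponent_vec t \<phi>"
proof
  fix x
  show "a x = exponent_vec t \<phi> x"
  proof (cases "active x")
    case True
    show ?thesis
    proof (rule ccontr)
      assume "a x \<noteq> exponent_vec t \<phi> x"
      hence "exponent_vec t \<phi> x < a x" using le[OF True] by simp
      hence "(\<Sum>y \<in> {y. active y \<and> block y = block x}. exponent_vec t \<phi> y)
          < (\<Sum>y \<in> {y. active y \<and> block y = block x}. a y)"
        using True le by (intro sum_strict_mono_ex1[OF finite_block]) auto
      thus False using sums[of "block x"] block_count_eq_sum[OF \<phi>] by simp
    qed
  qed (use supp exponent_active[OF \<phi>] in \<open>metis neq0_conv\<close>)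
qed

text \<open>An over-filled vertex \<open>x\<close> has an under-filled vertex \<open>y\<close> in its block, and moving a
  vertex of \<open>H\<close> from \<open>x\<close> to \<open>y\<close> brings the exponent closer to \<open>a\<close>.\<close>

lemma block_sums_move_step:
  assumes \<phi>: "\<phi> \<in> H" and sums: "\<And>z. (\<Sum>x \<in> {x. active x \<and> block x = z}. a x) = block_count \<phi> z"
    and x: "active x" "exponent_vec t \<phi> x > a x"
  shows "\<exists>\<phi>' \<in> H. block_count \<phi>' = block_count \<phi> \<and>
    (\<Sum>w \<in> {x. active x}. exponent_vec t \<phi>' w - a w) < (\<Sum>w \<in> {x. active x}. exponent_vec t \<phi> w - a w)"
proof -
  let ?X = "{y. active y \<and> block y = block x}"
  have "\<exists>y \<in> ?X. exponent_vec t \<phi> y < a y"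
  proof (rule ccontr)
    assume "\<not> ?thesis"
    hence "a y \<le> exponent_vec t \<phi> y" if "y \<in> ?X" for y using that by (simp add: not_less)
    hence "(\<Sum>y \<in> ?X. a y) < (\<Sum>y \<in> ?X. exponent_vec t \<phi> y)"
      using x by (intro sum_strict_mono_ex1[OF finite_block]) auto
    thus False using sums[of "block x"] block_count_eq_sum[OF \<phi>] by simp
  qed
  then obtain y where y: "y \<in> ?X" "exponent_vec t \<phi> y < a y" by blast
  have yx: "y \<noteq> x" using y x by auto
  obtain u where u: "u < t" "\<phi> u = x" using x(2) exponent_vec_pos_iff[of t \<phi> x] by auto
  have \<phi>': "\<phi>(u := y) \<in> H"
    using hom_move[OF \<phi> u(1)] same_block_cases[OF x(1), of y] y u by simp
  have exp': "exponent_vec t (\<phi>(u := y)) =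
      (exponent_vec t \<phi>)(x := exponent_vec t \<phi> x - 1, y := exponent_vec t \<phi> y + 1)"
    using exponent_vec_fun_upd[OF u(1)] yx u(2) by simp
  have "block_count (\<phi>(u := y)) = block_count \<phi>"
    unfolding block_count_def using u y by (intro ext arg_cong[where f = card]) auto
  moreover have "(\<Sum>w \<in> {x. active x}. exponent_vec t (\<phi>(u := y)) w - a w)
      < (\<Sum>w \<in> {x. active x}. exponent_vec t \<phi> w - a w)"
  proof (rule sum_strict_mono_ex1[OF finite_active])
    show "\<forall>w \<in> {x. active x}. exponent_vec t (\<phi>(u := y)) w - a w \<le> exponent_vec t \<phi> w - a w"
      unfolding exp' using y(2) by auto
    show "\<exists>w \<in> {x. active x}. exponent_vec t (\<phi>(u := y)) w - a w < exponent_vec t \<phi> w - a w"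
      using x yx unfolding exp' by (intro bexI[of _ x]) auto
  qed
  ultimately show ?thesis using \<phi>' by blast
qed

lemma hom_exponents_redistribute:
  assumes "\<phi> \<in> H" and supp: "\<And>x. a x > 0 \<Longrightarrow> active x"
    and "\<And>z. (\<Sum>x \<in> {x. active x \<and> block x = z}. a x) = block_count \<phi> z"
  shows "a \<in> hom_exponents t E n adj"
  using assms(1,3)
proof (induction "\<Sum>x \<in> {x. active x}. exponent_vec t \<phi> x - a x" arbitrary: \<phi> rule: less_induct)
  case less
  show ?case
  proof (cases "\<exists>x. active x \<and> exponent_vec t \<phi> x > a x")
    case True
    then obtain \<phi>' where "\<phi>' \<in> H" "block_count \<phi>' = block_count \<phi>"
      "(\<Sum>w \<in> {x. active x}. exponent_vec t \<phi>' w - a w) < (\<Sum>w \<in> {x. active x}. exponent_vec t \<phi> w - a w)"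
      using block_sums_move_step[OF less.prems] by blast
    thus ?thesis using less.hyps less.prems(2) by metis
  next
    case False
    hence "a = exponent_vec t \<phi>"
      by (intro exponent_eq_of_block_sums[OF less.prems(1) supp less.prems(2)]) (auto simp: not_less)
    thus ?thesis using less.prems(1) unfolding hom_exponents_def by blast
  qed
qed

definition looped :: "(nat \<Rightarrow> nat) \<Rightarrow> nat set" where
  "looped \<theta> = {u \<in> {0..<t}. adj (\<theta> u) (\<theta> u)}"

definition looped_index :: "(nat \<Rightarrow> nat) \<Rightarrow> nat \<Rightarrow> nat" where
  "looped_index \<theta> = (SOME h. bij_betw h (looped \<theta>) {0..<card (looped \<theta>)})"

text \<open>A homomorphism \<open>\<theta>\<close> into \<open>adj\<close> gives a proper colouring with \<open>n + t\<close> colours that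
  records its block counts: a vertex mapped to an unlooped vertex gets the representative of its
  class as colour, and the vertices mapped to looped vertices get distinct colours \<open>\<ge> n\<close>.\<close>

definition block_colouring :: "(nat \<Rightarrow> nat) \<Rightarrow> nat \<Rightarrow> nat" where
  "block_colouring \<theta> =
     restrict (\<lambda>u. if adj (\<theta> u) (\<theta> u) then n + looped_index \<theta> u else rep (\<theta> u)) {0..<t}"

lemma looped_index_bij: "bij_betw (looped_index \<theta>) (looped \<theta>) {0..<card (looped \<theta>)}"
proof -
  have "finite (looped \<theta>)" unfolding looped_def by simp
  from ex_bij_betw_finite_nat[OF this] show ?thesis unfolding looped_index_def by (rule someI_ex)
qed

lemma card_looped_le: "card (looped \<theta>) \<le> t"
proof -
  have "card (looped \<theta>) \<le> card {0..<t}" unfolding looped_def by (rule card_mono) auto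
  thus ?thesis by simp
qed

lemma card_looped: "\<theta> \<in> H \<Longrightarrow> card (looped \<theta>) = block_count \<theta> n"
  unfolding block_count_def looped_def using block_eq_n_iff hom_active
  by (intro arg_cong[where f = card]) auto

lemma block_colouring_apply:
  "u < t \<Longrightarrow> block_colouring \<theta> u = (if adj (\<theta> u) (\<theta> u) then n + looped_index \<theta> u else rep (\<theta> u))"
  unfolding block_colouring_def by simp

lemma looped_index_less: "u < t \<Longrightarrow> adj (\<theta> u) (\<theta> u) \<Longrightarrow> looped_index \<theta> u < card (looped \<theta>)"
  using looped_index_bij[of \<theta>] unfolding bij_betw_def looped_def by auto

lemma block_colouring_proper:
  assumes \<theta>: "\<theta> \<in> H"
  shows "block_colouring \<theta> \<in> homs t E (n + t) (\<noteq>)"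
proof (rule homsI)
  show "block_colouring \<theta> v < n + t" if v: "v < t" for v
    using block_colouring_apply[OF v] looped_index_less[OF v] card_looped_le[of \<theta>]
      rep_less[OF hom_active[OF \<theta> v]] by (cases "adj (\<theta> v) (\<theta> v)") fastforce+
  fix x w assume e: "(x, w) \<in> E"
  have xw: "x < t" "w < t" "x \<noteq> w" using edge_bounds[OF e] by auto
  have active: "active (\<theta> x)" "active (\<theta> w)" using hom_active[OF \<theta>] xw by auto
  have "looped_index \<theta> x \<noteq> looped_index \<theta> w" if "adj (\<theta> x) (\<theta> x)" "adj (\<theta> w) (\<theta> w)"
    using looped_index_bij[of \<theta>] xw that unfolding bij_betw_def looped_def by (auto dest: inj_onD)
  moreover have "rep (\<theta> x) \<noteq> rep (\<theta> w)" if "\<not> adj (\<theta> x) (\<theta> x)" "\<not> adj (\<theta> w) (\<theta> w)"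
    using rep_eq_imp_nonadj[OF active that] homsD(3)[OF \<theta> e] by blast
  ultimately show "block_colouring \<theta> x \<noteq> block_colouring \<theta> w"
    using block_colouring_apply[of _ \<theta>] xw rep_less[OF active(1)] rep_less[OF active(2)]
    by (auto split: if_splits)
qed (simp add: block_colouring_def)

lemma min_block_colouring:
  assumes "\<theta> \<in> H" "u < t"
  shows "min (block_colouring \<theta> u) n = block (\<theta> u)"
  using block_colouring_apply[OF assms(2)] rep_less[OF hom_active[OF assms]]
  unfolding block_def by auto

lemma exponent_block_colouring_low:
  assumes "\<theta> \<in> H" "y < n"
  shows "exponent_vec t (block_colouring \<theta>) y = block_count \<theta> y"
proof -
  have "block_colouring \<theta> u = y \<longleftrightarrow> block (\<theta> u) = y" if "u < t" for u
    unfolding min_block_colouring[OF assms(1) that, symmetric] using assms(2) by (auto simp: min_def)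
  thus ?thesis unfolding exponent_vec_def block_count_def by (intro arg_cong[where f = card]) auto
qed

lemma exponent_block_colouring_high:
  assumes \<theta>: "\<theta> \<in> H"
  shows "exponent_vec t (block_colouring \<theta>) (n + r) = of_bool (r < block_count \<theta> n)"
proof -
  have "block_colouring \<theta> u \<noteq> n + r" if "u < t" "\<not> adj (\<theta> u) (\<theta> u)" for u
    using block_colouring_apply[OF that(1)] rep_less[OF hom_active[OF \<theta> that(1)] that(2)] that(2)
    by simp
  hence "{u \<in> {0..<t}. block_colouring \<theta> u = n + r} = {u \<in> looped \<theta>. looped_index \<theta> u = r}"
    using block_colouring_apply[of _ \<theta>] unfolding looped_def by (auto split: if_splits)
  also have "card \<dots> = of_bool (r < card (looped \<theta>))"
  proof (cases "r < card (looped \<theta>)")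
    case True
    then obtain u where "u \<in> looped \<theta>" "looped_index \<theta> u = r"
      using looped_index_bij[of \<theta>] unfolding bij_betw_def by (metis atLeastLessThan_iff imageE zero_le)
    hence "{u \<in> looped \<theta>. looped_index \<theta> u = r} = {u}"
      using looped_index_bij[of \<theta>] unfolding bij_betw_def by (auto dest: inj_onD)
    thus ?thesis using True by simp
  next
    case False
    hence empty: "{u \<in> looped \<theta>. looped_index \<theta> u = r} = {}"
      using looped_index_bij[of \<theta>] unfolding bij_betw_def by auto
    show ?thesis unfolding empty using False by simp
  qed
  finally show ?thesis unfolding exponent_vec_def card_looped[OF \<theta>] .
qed

lemma block_count_colouring_sum:
  assumes "c \<in> homs t E (n + t) (\<noteq>)"
  shows "card {u \<in> {0..<t}. min (c u) n = z} = (\<Sum>y \<in> {y \<in> {0..<n + t}. min y n = z}. exponent_vec t c y)"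
  using card_fibres_sum[of t c "{0..<n + t}" "\<lambda>y. min y n" z] homsD(1)[OF assms] by simp

lemma colouring_to_hom:
  assumes c: "c \<in> homs t E (n + t) (\<noteq>)"
    and low: "\<And>v. v < t \<Longrightarrow> c v < n \<Longrightarrow> active (c v) \<and> \<not> adj (c v) (c v) \<and> rep (c v) = c v"
    and high: "\<And>v. v < t \<Longrightarrow> c v \<ge> n \<Longrightarrow> active l \<and> adj l l"
  shows "\<exists>\<psi> \<in> H. \<forall>v<t. block (\<psi> v) = min (c v) n"
proof -
  define \<psi> where "\<psi> = restrict (\<lambda>v. if c v < n then c v else l) {0..<t}"
  have active: "active (\<psi> v)" if "v < t" for v
    using low[OF that] high[OF that] that unfolding \<psi>_def by (cases "c v < n") auto
  have "\<psi> \<in> H"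
  proof (rule homsI)
    show "\<psi> v < n" if "v < t" for v using active[OF that] unfolding active_def by simp
    fix x y assume e: "(x, y) \<in> E"
    have xy: "x < t" "y < t" using edge_bounds[OF e] by auto
    have "c x \<noteq> c y" using homsD(3)[OF c e] .
    moreover have "rep (c x) = rep (c y)" if "c x < n" "c y < n" "\<not> adj (c x) (c y)"
      using rep_eq low xy that by blast
    ultimately show "adj (\<psi> x) (\<psi> y)"
      using low[OF xy(1)] low[OF xy(2)] high[OF xy(1)] high[OF xy(2)] active[OF xy(1)] active[OF xy(2)]
        looped_adj active_adj_sym xy unfolding \<psi>_def by (auto simp: not_less)
  qed (simp add: \<psi>_def)
  moreover have "block (\<psi> v) = min (c v) n" if "v < t" for v
    using low[OF that] high[OF that] that block_unlooped block_eq_n_iff unfolding \<psi>_def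
    by (cases "c v < n") auto
  ultimately show ?thesis by blast
qed

lemma block_count_gap:
  assumes \<phi>: "\<phi> \<in> H" and \<psi>: "\<psi> \<in> H" and ab: "exponent_vec t \<phi> i > exponent_vec t \<psi> i"
    and F: "\<And>j. exponent_vec t \<phi> j < exponent_vec t \<psi> j \<Longrightarrow> \<not> adj j j \<and> adj i j"
  shows "block_count \<psi> (block i) < block_count \<phi> (block i)" and "block_count \<psi> n \<le> block_count \<phi> n"
proof -
  have i: "active i" using exponent_active[OF \<phi>] ab by simp
  have le: "exponent_vec t \<psi> x \<le> exponent_vec t \<phi> x"
    if "active x" "block x = block i \<or> block x = n" for x
  proof (rule ccontr)
    assume "\<not> ?thesis"
    hence "\<not> adj x x" "adj i x" using F by auto
    thus False using that same_block_cases[OF i that(1)] block_eq_n_iff by auto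
  qed
  show "block_count \<psi> (block i) < block_count \<phi> (block i)"
    unfolding block_count_eq_sum[OF \<phi>] block_count_eq_sum[OF \<psi>]
    using i ab le by (intro sum_strict_mono_ex1[OF finite_block]) auto
  show "block_count \<psi> n \<le> block_count \<phi> n"
    unfolding block_count_eq_sum[OF \<phi>] block_count_eq_sum[OF \<psi>] using le by (intro sum_mono) auto
qed

lemma block_count_le: "block_count \<theta> z \<le> t"
proof -
  have "block_count \<theta> z \<le> card {0..<t}" unfolding block_count_def by (rule card_mono) auto
  thus ?thesis by simp
qed

lemma hom_exponents_move:
  assumes \<phi>: "\<phi> \<in> H" and u: "u < t" "\<phi> u = i" and j: "active j" "j \<noteq> i" "adj j j \<or> \<not> adj i j"
  shows "(exponent_vec t \<phi>)(i := exponent_vec t \<phi> i - 1, j := exponent_vec t \<phi> j + 1)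
    \<in> hom_exponents t E n adj"
proof -
  have "\<phi>(u := j) \<in> H" using hom_move[OF \<phi> u(1) j(1)] j(3) u(2) by simp
  thus ?thesis using exponent_vec_fun_upd[OF u(1), of j \<phi>] j(2) u(2) unfolding hom_exponents_def
    by (metis image_eqI)
qed

lemma block_colour_gap:
  assumes \<phi>: "\<phi> \<in> H" and \<psi>: "\<psi> \<in> H" and x: "active x"
    and gap: "block_count \<psi> (block x) < block_count \<phi> (block x)"
  shows "\<exists>k < n + t. min k n = block x \<and>
    exponent_vec t (block_colouring \<psi>) k < exponent_vec t (block_colouring \<phi>) k"
proof (cases "adj x x")
  case True
  hence bx: "block x = n" using block_eq_n_iff[OF x] by simp
  have "block_count \<psi> n < t" using gap block_count_le[of \<phi> n] bx by simp
  thus ?thesis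
    using gap bx exponent_block_colouring_high[OF \<phi>] exponent_block_colouring_high[OF \<psi>]
    by (intro exI[of _ "n + block_count \<psi> n"]) simp
next
  case False
  hence "block x = rep x" "rep x < n" using block_unlooped[OF x] by auto
  thus ?thesis
    using gap exponent_block_colouring_low[OF \<phi>] exponent_block_colouring_low[OF \<psi>]
    by (intro exI[of _ "rep x"]) simp
qed

lemma block_count_less_imp_exponent_less:
  assumes \<phi>: "\<phi> \<in> H" and \<psi>: "\<psi> \<in> H" and less: "block_count \<phi> z < block_count \<psi> z"
  shows "\<exists>j. active j \<and> block j = z \<and> exponent_vec t \<phi> j < exponent_vec t \<psi> j"
proof (rule ccontr)
  assume "\<not> ?thesis"
  hence "block_count \<psi> z \<le> block_count \<phi> z"
    unfolding block_count_eq_sum[OF \<phi>] block_count_eq_sum[OF \<psi>] by (intro sum_mono) (auto simp: not_less)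
  thus False using less by simp
qed

lemma underused_colour:
  assumes \<phi>: "\<phi> \<in> H" and \<psi>: "\<psi> \<in> H" and le: "block_count \<psi> n \<le> block_count \<phi> n"
    and m: "exponent_vec t (block_colouring \<phi>) m < exponent_vec t (block_colouring \<psi>) m"
  shows "m < n" "active m" "\<not> adj m m" "rep m = m" "block_count \<phi> m < block_count \<psi> m"
proof -
  show mn: "m < n"
  proof (rule ccontr)
    assume "\<not> m < n"
    then obtain r where "m = n + r" by (metis le_iff_add not_less)
    thus False using m le exponent_block_colouring_high[OF \<phi>] exponent_block_colouring_high[OF \<psi>]
      by (auto simp: of_bool_def split: if_splits)
  qed
  obtain w where w: "w < t" "block_colouring \<psi> w = m"
    using m exponent_vec_pos_iff[of t "block_colouring \<psi>" m] by auto
  have w_act: "active (\<psi> w)" using hom_active[OF \<psi> w(1)] .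
  have nl: "\<not> adj (\<psi> w) (\<psi> w)" using w mn block_colouring_apply[OF w(1), of \<psi>] by (auto split: if_splits)
  have "m = rep (\<psi> w)" using w block_colouring_apply[OF w(1), of \<psi>] nl by simp
  thus "active m" "\<not> adj m m" "rep m = m"
    using rep_props[OF w_act nl] rep_idem[OF w_act nl] by auto
  show "block_count \<phi> m < block_count \<psi> m"
    using m exponent_block_colouring_low[OF \<phi> mn] exponent_block_colouring_low[OF \<psi> mn] by simp
qed

lemma exchanged_colouring_to_hom:
  assumes \<phi>: "\<phi> \<in> H" and c: "c \<in> homs t E (n + t) (\<noteq>)"
    and c_exp: "exponent_vec t c = (exponent_vec t (block_colouring \<phi>))
      (k := exponent_vec t (block_colouring \<phi>) k - 1, m := exponent_vec t (block_colouring \<phi>) m + 1)"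
    and m: "m < n" "active m" "\<not> adj m m" "rep m = m"
  shows "\<exists>\<psi> \<in> H. \<forall>v<t. block (\<psi> v) = min (c v) n"
proof -
  have used: "\<exists>w<t. block_colouring \<phi> w = c v" if "v < t" "c v \<noteq> m" for v
  proof -
    have "exponent_vec t c (c v) > 0" using exponent_vec_pos_iff that(1) by blast
    hence "exponent_vec t (block_colouring \<phi>) (c v) > 0"
      using that(2) unfolding c_exp by (cases "c v = k") auto
    thus ?thesis using exponent_vec_pos_iff by metis
  qed
  define l where "l = (SOME x. active x \<and> adj x x)"
  show ?thesis
  proof (rule colouring_to_hom[OF c, of l])
    fix v assume v: "v < t" "c v < n"
    show "active (c v) \<and> \<not> adj (c v) (c v) \<and> rep (c v) = c v"
    proof (cases "c v = m")
      case False
      then obtain w where w: "w < t" "block_colouring \<phi> w = c v" using used v(1) by blast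
      have w_act: "active (\<phi> w)" using hom_active[OF \<phi> w(1)] .
      have nl: "\<not> adj (\<phi> w) (\<phi> w)" using w v(2) block_colouring_apply[OF w(1), of \<phi>] by (auto split: if_splits)
      hence "c v = rep (\<phi> w)" using w block_colouring_apply[OF w(1), of \<phi>] by simp
      thus ?thesis using rep_props[OF w_act nl] rep_idem[OF w_act nl] by auto
    qed (use m in simp)
  next
    fix v assume v: "v < t" "c v \<ge> n"
    then obtain w where w: "w < t" "block_colouring \<phi> w = c v" using used m(1) by fastforce
    have "adj (\<phi> w) (\<phi> w)"
      using w v(2) block_colouring_apply[OF w(1), of \<phi>] rep_less[OF hom_active[OF \<phi> w(1)]]
      by (auto split: if_splits)
    hence "\<exists>x. active x \<and> adj x x" using hom_active[OF \<phi> w(1)] by blast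
    thus "active l \<and> adj l l" unfolding l_def by (rule someI_ex)
  qed
qed

lemma block_sums_after_exchange:
  fixes \<phi> :: "nat \<Rightarrow> nat"
  defines "a \<equiv> exponent_vec t \<phi>" and "ca \<equiv> exponent_vec t (block_colouring \<phi>)"
  assumes \<phi>: "\<phi> \<in> H" and c: "c \<in> homs t E (n + t) (\<noteq>)"
    and c_exp: "exponent_vec t c = ca(k := ca k - 1, m := ca m + 1)"
    and \<psi>: "\<forall>v<t. block (\<psi> v) = min (c v) n"
    and k: "k < n + t" "min k n = block i" "ca k \<ge> 1" and m: "m < n" "k \<noteq> m"
    and i: "active i" "a i \<ge> 1" and j: "active j" "block j = m" "i \<noteq> j"
  shows "(\<Sum>x \<in> {x. active x \<and> block x = z}. (a(i := a i - 1, j := a j + 1)) x) = block_count \<psi> z"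
proof -
  let ?X = "{x. active x \<and> block x = z}" and ?Y = "{y \<in> {0..<n + t}. min y n = z}"
  have "block_count \<psi> z = card {u \<in> {0..<t}. min (c u) n = z}"
    unfolding block_count_def using \<psi> by (intro arg_cong[where f = card]) auto
  also have "\<dots> = (\<Sum>y \<in> ?Y. exponent_vec t c y)" by (rule block_count_colouring_sum[OF c])
  finally have \<psi>_sum: "block_count \<psi> z = (\<Sum>y \<in> ?Y. exponent_vec t c y)" .
  have "(\<Sum>x \<in> ?X. a x) = block_count \<phi> z" unfolding a_def by (rule block_count_eq_sum[OF \<phi>, symmetric])
  also have "\<dots> = card {u \<in> {0..<t}. min (block_colouring \<phi> u) n = z}"
    unfolding block_count_def using min_block_colouring[OF \<phi>] by (intro arg_cong[where f = card]) auto
  also have "\<dots> = (\<Sum>y \<in> ?Y. ca y)"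
    unfolding ca_def by (rule block_count_colouring_sum[OF block_colouring_proper[OF \<phi>]])
  finally have \<phi>_sum: "(\<Sum>x \<in> ?X. a x) = (\<Sum>y \<in> ?Y. ca y)" .
  have "(\<Sum>x \<in> ?X. (a(i := a i - 1, j := a j + 1)) x) + of_bool (i \<in> ?X) = (\<Sum>x \<in> ?X. a x) + of_bool (j \<in> ?X)"
    by (rule sum_fun_upd_exchange[of _ a i j, OF finite_block i(2) j(3)])
  moreover have "(\<Sum>y \<in> ?Y. exponent_vec t c y) + of_bool (k \<in> ?Y) = (\<Sum>y \<in> ?Y. ca y) + of_bool (m \<in> ?Y)"
    unfolding c_exp by (rule sum_fun_upd_exchange) (use k m in auto)
  moreover have "i \<in> ?X \<longleftrightarrow> k \<in> ?Y" "j \<in> ?X \<longleftrightarrow> m \<in> ?Y" using i j k m by auto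
  ultimately show ?thesis using \<psi>_sum \<phi>_sum by simp
qed

lemma exchange_across_blocks:
  assumes K: "M_convex (hom_exponents t E (n + t) (\<noteq>))"
    and \<phi>: "\<phi> \<in> H" and \<psi>: "\<psi> \<in> H" and ab: "exponent_vec t \<phi> i > exponent_vec t \<psi> i"
    and F: "\<And>j. exponent_vec t \<phi> j < exponent_vec t \<psi> j \<Longrightarrow> \<not> adj j j \<and> adj i j"
  shows "\<exists>j. exponent_vec t \<phi> j < exponent_vec t \<psi> j \<and>
    (exponent_vec t \<phi>)(i := exponent_vec t \<phi> i - 1, j := exponent_vec t \<phi> j + 1) \<in> hom_exponents t E n adj"
proof -
  txt \<open>Exchange between the block colourings, then read the result back as a homomorphism.\<close>
  let ?a = "exponent_vec t \<phi>" and ?ca = "exponent_vec t (block_colouring \<phi>)"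
    and ?cb = "exponent_vec t (block_colouring \<psi>)"
  have i: "active i" using exponent_active[OF \<phi>] ab by simp
  note gap = block_count_gap[OF \<phi> \<psi> ab F]
  obtain k where k: "k < n + t" "min k n = block i" "?cb k < ?ca k"
    using block_colour_gap[OF \<phi> \<psi> i gap(1)] by blast
  have colourings: "?ca \<in> hom_exponents t E (n + t) (\<noteq>)" "?cb \<in> hom_exponents t E (n + t) (\<noteq>)"
    using block_colouring_proper[OF \<phi>] block_colouring_proper[OF \<psi>] unfolding hom_exponents_def by auto
  obtain m where m: "?ca m < ?cb m"
    and "?ca(k := ?ca k - 1, m := ?ca m + 1) \<in> hom_exponents t E (n + t) (\<noteq>)"
    using K[unfolded M_convex_def, rule_format, OF colourings k(3)] by blast
  then obtain c where c: "c \<in> homs t E (n + t) (\<noteq>)"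
    and c_exp: "exponent_vec t c = ?ca(k := ?ca k - 1, m := ?ca m + 1)"
    unfolding hom_exponents_def by auto
  note m_props = underused_colour[OF \<phi> \<psi> gap(2) m]
  obtain j where j: "active j" "block j = m" "?a j < exponent_vec t \<psi> j"
    using block_count_less_imp_exponent_less[OF \<phi> \<psi> m_props(5)] by blast
  obtain \<psi>' where \<psi>': "\<psi>' \<in> H" "\<forall>v<t. block (\<psi>' v) = min (c v) n"
    using exchanged_colouring_to_hom[OF \<phi> c c_exp m_props(1-4)] by blast
  have "?a(i := ?a i - 1, j := ?a j + 1) \<in> hom_exponents t E n adj"
  proof (rule hom_exponents_redistribute[OF \<psi>'(1)])
    show "active x" if "(?a(i := ?a i - 1, j := ?a j + 1)) x > 0" for x
      using that j(1) exponent_active[OF \<phi>, of x] by (cases "x = j"; cases "x = i") auto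
    show "(\<Sum>x \<in> {x. active x \<and> block x = z}. (?a(i := ?a i - 1, j := ?a j + 1)) x)
        = block_count \<psi>' z" for z
      using ab j m k
      by (intro block_sums_after_exchange[OF \<phi> c c_exp \<psi>'(2) k(1,2) _ m_props(1) _ i _ j(1,2)]) auto
  qed
  thus ?thesis using j(3) by blast
qed

theorem M_convex_hom_exponents:
  assumes K: "M_convex (hom_exponents t E (n + t) (\<noteq>))"
  shows "M_convex (hom_exponents t E n adj)"
  unfolding M_convex_def
proof (intro ballI allI impI)
  fix a b i assume "a \<in> hom_exponents t E n adj" "b \<in> hom_exponents t E n adj" and ab: "a i > b i"
  then obtain \<phi> \<psi> where \<phi>: "\<phi> \<in> H" "a = exponent_vec t \<phi>" and \<psi>: "\<psi> \<in> H" "b = exponent_vec t \<psi>"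
    unfolding hom_exponents_def by blast
  show "\<exists>j. a j < b j \<and> a(i := a i - 1, j := a j + 1) \<in> hom_exponents t E n adj"
  proof (cases "\<exists>j. a j < b j \<and> (adj j j \<or> \<not> adj i j)")
    case True
    then obtain j where j: "a j < b j" "adj j j \<or> \<not> adj i j" by blast
    obtain u where u: "u < t" "\<phi> u = i" using ab exponent_vec_pos_iff[of t \<phi> i] \<phi>(2) by auto
    have "active j" using exponent_active[OF \<psi>(1)] j(1) \<psi>(2) by simp
    thus ?thesis using hom_exponents_move[OF \<phi>(1) u] j ab \<phi>(2) by fastforce
  next
    case False
    thus ?thesis using exchange_across_blocks[OF K \<phi>(1) \<psi>(1)] ab unfolding \<phi>(2) \<psi>(2) by blast
  qed
qed

end

lemma connected_graph_no_isolated: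
  assumes conn: "connected_graph t E" and t: "t \<ge> 2" and u: "u < t"
  shows "\<exists>v. (u, v) \<in> E \<or> (v, u) \<in> E"
proof -
  define v where "v = (if u = 0 then 1 else (0::nat))"
  have v: "v < t" "v \<noteq> u" unfolding v_def using t u by auto
  have "(\<lambda>x y. (x, y) \<in> E \<or> (y, x) \<in> E)\<^sup>*\<^sup>* u v"
    using conn u v unfolding connected_graph_def by blast
  thus ?thesis using v(2) by (cases rule: converse_rtranclpE) blast+
qed

lemma multipartite_target_antiferromagnetic:
  assumes "simple_graph t E" and "connected_graph t E" and "t \<ge> 2" and af: "antiferromagnetic n G"
  shows "multipartite_target t E n (\<lambda>i j. G $$ (i, j) > 0)"
proof
  show "E \<subseteq> {(u, v). u < v \<and> v < t}" using assms(1) unfolding simple_graph_def .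
  show "\<exists>v. (u, v) \<in> E \<or> (v, u) \<in> E" if "u < t" for u
    using connected_graph_no_isolated[OF assms(2,3) that] .
  show "(G $$ (x, y) > 0) = (G $$ (y, x) > 0)" if "x < n" "y < n" for x y
    using antiferromagneticD(5)[OF af that] by simp
  fix x y z assume xyz: "x < n" "y < n" "z < n" and "\<exists>l<n. G $$ (y, l) > 0"
    and "\<not> G $$ (x, y) > 0" "\<not> G $$ (y, z) > 0"
  thus "\<not> G $$ (x, z) > 0"
    using antiferromagnetic_nonadjacency_trans[OF af xyz] antiferromagneticD(4)[OF af]
    by (metis order.antisym not_le)
qed

theorem proposition3p3:
  fixes t :: nat and E :: "(nat \<times> nat) set"
  assumes "t \<ge> 2"
    and "simple_graph t E"
    and "connected_graph t E"
    and "\<exists>q\<ge>t. M_convex (hsupport t E q (complete_graph q))"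
  shows "\<forall>n (G :: real mat). antiferromagnetic n G \<longrightarrow> M_convex (hsupport t E n G)"
proof (intro allI impI)
  fix n and G :: "real mat"
  assume af: "antiferromagnetic n G"
  have E: "E \<subseteq> {0..<t} \<times> {0..<t}" using assms(2) unfolding simple_graph_def by auto
  obtain q where q: "q \<ge> t" "M_convex (hsupport t E q (complete_graph q))" using assms(4) by blast
  have "M_convex (hom_exponents t E (n + t) (\<noteq>))"
    using M_convex_colourings[OF E _ q(1)] q(2) unfolding hsupport_complete_graph[OF E] .
  hence "M_convex (hom_exponents t E n (\<lambda>i j. G $$ (i, j) > 0))"
    by (rule multipartite_target.M_convex_hom_exponents
        [OF multipartite_target_antiferromagnetic[OF assms(2,3,1) af]])
  moreover have "\<forall>i<n. \<forall>j<n. G $$ (i, j) \<ge> 0" using antiferromagneticD(4)[OF af] by blast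
  ultimately show "M_convex (hsupport t E n G)" using hsupport_eq_hom_exponents[OF E] by simp
qed

end
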